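(* Let $\rho\in\mathrm{Irr}(W)$. If there exists $\eta\in\mathrm X(\rho)$ with $\rho^*\otimes\epsilon\simeq\rho\otimes\eta$, then such $\eta$ is unique. The corresponding embedding $\epsilon\otimes\eta\hookrightarrow\rho^*\otimes\rho^*$ defines, up to a scalar, a nondegenerate bilinear form $\langle\,,\rangle$ on $V_\rho$ satisfying $\langle\rho(w)x,\rho(w)y\rangle=\epsilon(w)\eta(w)\langle x,y\rangle$; letting $\mathfrak{osp}(V_\rho)\subset\mathfrak{sl}(V_\rho)$ be the Lie subalgebra of endomorphisms $u$ with $\langle ux,y\rangle+\langle x,uy\rangle=0$, one has $\rho(\mathcal H')\subset\mathfrak{osp}(V_\rho)$. If moreover the form is symmetric and $\dim\rho>1$, then it is hyperbolic (i.e. $V_\rho$ is an orthogonal direct sum of hyperbolic planes).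
   Context: $W\subset\mathrm{GL}(V)$ is a finite group generated by reflections (elements of order 2 fixing a hyperplane) of a finite-dimensional complex vector space $V$; $\mathcal R$ is its set of reflections, $\epsilon=\det:W\to\{\pm1\}$ its sign character. $\mathbf k$ is a characteristic-0 field over which all irreducible representations of $W$ are defined and absolutely irreducible. $\mathcal H$ is the Lie subalgebra of $\mathbf kW$ (bracket $xy-yx$) generated by $\mathcal R$, $\mathcal H'$ its derived algebra. For $\rho\in\mathrm{Irr}(W)$ acting on $V_\rho$: $\mathrm X(\rho)=\{\eta\in\mathrm{Hom}(W,\{\pm1\}):\forall s\in\mathcal R,\ \eta(s)=-1\Rightarrow\rho(s)=\pm\mathrm{Id}\}$. *)

theory Defs
  imports "Jordan_Normal_Form.Determinant"
begin

definition is_reflection :: "nat \<Rightarrow> complex mat \<Rightarrow> bool" where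
  "is_reflection n s \<longleftrightarrow> s \<in> carrier_mat n n \<and> s * s = 1\<^sub>m n \<and> s \<noteq> 1\<^sub>m n \<and>
     (\<exists>c \<in> carrier_vec n. c \<noteq> 0\<^sub>v n \<and>
        (\<forall>v \<in> carrier_vec n. c \<bullet> v = 0 \<longrightarrow> s *\<^sub>v v = v))"

definition reflections :: "nat \<Rightarrow> complex mat set \<Rightarrow> complex mat set" where
  "reflections n W = {s \<in> W. is_reflection n s}"

text \<open>Submonoid generated by a set (for a finite group this is the subgroup generated).\<close>
inductive_set mat_monoid_gen :: "nat \<Rightarrow> complex mat set \<Rightarrow> complex mat set"
  for n S where
  one: "1\<^sub>m n \<in> mat_monoid_gen n S"
| gen: "s \<in> S \<Longrightarrow> x \<in> mat_monoid_gen n S \<Longrightarrow> s * x \<in> mat_monoid_gen n S"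

definition finite_mat_group :: "nat \<Rightarrow> complex mat set \<Rightarrow> bool" where
  "finite_mat_group n W \<longleftrightarrow> finite W \<and> W \<subseteq> carrier_mat n n \<and> 1\<^sub>m n \<in> W \<and>
     (\<forall>x \<in> W. \<forall>y \<in> W. x * y \<in> W) \<and> (\<forall>x \<in> W. \<exists>y \<in> W. x * y = 1\<^sub>m n \<and> y * x = 1\<^sub>m n)"

definition finite_reflection_group :: "nat \<Rightarrow> complex mat set \<Rightarrow> bool" where
  "finite_reflection_group n W \<longleftrightarrow> finite_mat_group n W \<and> W = mat_monoid_gen n (reflections n W)"

definition grp_inv :: "nat \<Rightarrow> complex mat set \<Rightarrow> complex mat \<Rightarrow> complex mat" where
  "grp_inv n W w = (THE v. v \<in> W \<and> w * v = 1\<^sub>m n)"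

text \<open>The sign character epsilon = det, with values +1/-1 taken in the field k.\<close>
definition sign_char :: "complex mat \<Rightarrow> 'k :: field" where
  "sign_char w = (if det w = 1 then 1 else - 1)"

definition is_rep :: "nat \<Rightarrow> complex mat set \<Rightarrow> nat \<Rightarrow> (complex mat \<Rightarrow> 'k :: field mat) \<Rightarrow> bool" where
  "is_rep n W d \<rho> \<longleftrightarrow> (\<forall>w \<in> W. \<rho> w \<in> carrier_mat d d) \<and> \<rho> (1\<^sub>m n) = 1\<^sub>m d \<and>
     (\<forall>x \<in> W. \<forall>y \<in> W. \<rho> (x * y) = \<rho> x * \<rho> y)"

definition is_subspace :: "nat \<Rightarrow> 'k :: field vec set \<Rightarrow> bool" where
  "is_subspace d U \<longleftrightarrow> U \<subseteq> carrier_vec d \<and> 0\<^sub>v d \<in> U \<and>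
     (\<forall>u \<in> U. \<forall>v \<in> U. u + v \<in> U) \<and> (\<forall>c. \<forall>u \<in> U. c \<cdot>\<^sub>v u \<in> U)"

definition irreducible_rep :: "nat \<Rightarrow> complex mat set \<Rightarrow> nat \<Rightarrow> (complex mat \<Rightarrow> 'k :: field mat) \<Rightarrow> bool" where
  "irreducible_rep n W d \<rho> \<longleftrightarrow> is_rep n W d \<rho> \<and> d > 0 \<and>
     (\<forall>U. is_subspace d U \<and> (\<forall>w \<in> W. \<forall>u \<in> U. \<rho> w *\<^sub>v u \<in> U) \<longrightarrow>
          U = {0\<^sub>v d} \<or> U = carrier_vec d)"

text \<open>k is a splitting field for W: every irreducible representation of W over k
  is absolutely irreducible (its commutant consists of scalars).\<close>
definition splitting_field_for :: "'k :: field itself \<Rightarrow> nat \<Rightarrow> complex mat set \<Rightarrow> bool" where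
  "splitting_field_for TYPE('k) n W \<longleftrightarrow>
     (\<forall>d (\<sigma> :: complex mat \<Rightarrow> 'k mat). irreducible_rep n W d \<sigma> \<longrightarrow>
        (\<forall>A \<in> carrier_mat d d. (\<forall>w \<in> W. A * \<sigma> w = \<sigma> w * A) \<longrightarrow> (\<exists>c. A = c \<cdot>\<^sub>m 1\<^sub>m d)))"

definition sign_hom :: "complex mat set \<Rightarrow> (complex mat \<Rightarrow> 'k :: field) \<Rightarrow> bool" where
  "sign_hom W \<eta> \<longleftrightarrow> (\<forall>w \<in> W. \<eta> w = 1 \<or> \<eta> w = - 1) \<and> (\<forall>x \<in> W. \<forall>y \<in> W. \<eta> (x * y) = \<eta> x * \<eta> y)"

definition X_set :: "nat \<Rightarrow> complex mat set \<Rightarrow> nat \<Rightarrow> (complex mat \<Rightarrow> 'k :: field mat) \<Rightarrow> (complex mat \<Rightarrow> 'k) set" where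
  "X_set n W d \<rho> = {\<eta>. sign_hom W \<eta> \<and>
     (\<forall>s \<in> reflections n W. \<eta> s = - 1 \<longrightarrow> \<rho> s = 1\<^sub>m d \<or> \<rho> s = - (1\<^sub>m d))}"

definition dual_rep :: "nat \<Rightarrow> complex mat set \<Rightarrow> (complex mat \<Rightarrow> 'k :: field mat) \<Rightarrow> complex mat \<Rightarrow> 'k mat" where
  "dual_rep n W \<rho> w = transpose_mat (\<rho> (grp_inv n W w))"

definition twist :: "(complex mat \<Rightarrow> 'k :: field mat) \<Rightarrow> (complex mat \<Rightarrow> 'k) \<Rightarrow> complex mat \<Rightarrow> 'k mat" where
  "twist \<rho> \<chi> w = \<chi> w \<cdot>\<^sub>m \<rho> w"

definition rep_iso :: "complex mat set \<Rightarrow> nat \<Rightarrow> (complex mat \<Rightarrow> 'k :: field mat) \<Rightarrow> (complex mat \<Rightarrow> 'k mat) \<Rightarrow> bool" where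
  "rep_iso W d \<rho> \<sigma> \<longleftrightarrow> (\<exists>P \<in> carrier_mat d d. invertible_mat P \<and> (\<forall>w \<in> W. P * \<rho> w = \<sigma> w * P))"

definition bform :: "'k :: field mat \<Rightarrow> 'k vec \<Rightarrow> 'k vec \<Rightarrow> 'k" where
  "bform B x y = x \<bullet> (B *\<^sub>v y)"

definition nondegenerate :: "nat \<Rightarrow> 'k :: field mat \<Rightarrow> bool" where
  "nondegenerate d B \<longleftrightarrow> (\<forall>x \<in> carrier_vec d. (\<forall>y \<in> carrier_vec d. bform B x y = 0) \<longrightarrow> x = 0\<^sub>v d)"

definition invariant_form :: "complex mat set \<Rightarrow> nat \<Rightarrow> (complex mat \<Rightarrow> 'k :: field mat) \<Rightarrow> (complex mat \<Rightarrow> 'k) \<Rightarrow> 'k mat \<Rightarrow> bool" where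
  "invariant_form W d \<rho> \<chi> B \<longleftrightarrow> B \<in> carrier_mat d d \<and>
     (\<forall>w \<in> W. \<forall>x \<in> carrier_vec d. \<forall>y \<in> carrier_vec d.
        bform B (\<rho> w *\<^sub>v x) (\<rho> w *\<^sub>v y) = \<chi> w * bform B x y)"

definition symmetric_form :: "nat \<Rightarrow> 'k :: field mat \<Rightarrow> bool" where
  "symmetric_form d B \<longleftrightarrow> (\<forall>x \<in> carrier_vec d. \<forall>y \<in> carrier_vec d. bform B x y = bform B y x)"

definition hyperbolic_form :: "nat \<Rightarrow> 'k :: field mat \<Rightarrow> bool" where
  "hyperbolic_form d B \<longleftrightarrow> (\<exists>m (e :: nat \<Rightarrow> 'k vec) f. d = 2 * m \<and>
     (\<forall>i < m. e i \<in> carrier_vec d \<and> f i \<in> carrier_vec d) \<and>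
     (\<forall>i < m. \<forall>j < m. bform B (e i) (e j) = 0 \<and> bform B (f i) (f j) = 0 \<and>
         bform B (e i) (f j) = (if i = j then 1 else 0) \<and>
         bform B (f j) (e i) = (if i = j then 1 else 0)) \<and>
     (\<forall>v \<in> carrier_vec d. \<exists>a b. \<forall>k < d. v $ k = (\<Sum>i<m. a i * e i $ k + b i * f i $ k)))"

definition mat_trace :: "'k :: field mat \<Rightarrow> 'k" where
  "mat_trace A = (\<Sum>i < dim_row A. A $$ (i, i))"

definition in_osp :: "nat \<Rightarrow> 'k :: field mat \<Rightarrow> 'k mat \<Rightarrow> bool" where
  "in_osp d B u \<longleftrightarrow> u \<in> carrier_mat d d \<and> mat_trace u = 0 \<and>
     (\<forall>x \<in> carrier_vec d. \<forall>y \<in> carrier_vec d. bform B (u *\<^sub>v x) y + bform B x (u *\<^sub>v y) = 0)"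

definition ga_mult :: "complex mat set \<Rightarrow> (complex mat \<Rightarrow> 'k :: field) \<Rightarrow> (complex mat \<Rightarrow> 'k) \<Rightarrow> complex mat \<Rightarrow> 'k" where
  "ga_mult W a b g = (\<Sum>x \<in> W. \<Sum>y \<in> W. if x * y = g then a x * b y else 0)"

definition ga_bracket :: "complex mat set \<Rightarrow> (complex mat \<Rightarrow> 'k :: field) \<Rightarrow> (complex mat \<Rightarrow> 'k) \<Rightarrow> complex mat \<Rightarrow> 'k" where
  "ga_bracket W a b = (\<lambda>g. ga_mult W a b g - ga_mult W b a g)"

definition ga_basis :: "complex mat \<Rightarrow> complex mat \<Rightarrow> 'k :: field" where
  "ga_basis s = (\<lambda>g. if g = s then 1 else 0)"

inductive_set lie_H :: "nat \<Rightarrow> complex mat set \<Rightarrow> (complex mat \<Rightarrow> 'k :: field) set"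
  for n W where
  gen: "s \<in> reflections n W \<Longrightarrow> ga_basis s \<in> lie_H n W"
| add: "a \<in> lie_H n W \<Longrightarrow> b \<in> lie_H n W \<Longrightarrow> (\<lambda>g. a g + b g) \<in> lie_H n W"
| smult: "a \<in> lie_H n W \<Longrightarrow> (\<lambda>g. c * a g) \<in> lie_H n W"
| bracket: "a \<in> lie_H n W \<Longrightarrow> b \<in> lie_H n W \<Longrightarrow> ga_bracket W a b \<in> lie_H n W"

inductive_set lie_H' :: "nat \<Rightarrow> complex mat set \<Rightarrow> (complex mat \<Rightarrow> 'k :: field) set"
  for n W where
  zero: "(\<lambda>g. 0) \<in> lie_H' n W"
| bracket: "a \<in> lie_H n W \<Longrightarrow> b \<in> lie_H n W \<Longrightarrow> ga_bracket W a b \<in> lie_H' n W"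
| add: "a \<in> lie_H' n W \<Longrightarrow> b \<in> lie_H' n W \<Longrightarrow> (\<lambda>g. a g + b g) \<in> lie_H' n W"
| smult: "a \<in> lie_H' n W \<Longrightarrow> (\<lambda>g. c * a g) \<in> lie_H' n W"

definition rep_ext :: "complex mat set \<Rightarrow> nat \<Rightarrow> (complex mat \<Rightarrow> 'k :: field mat) \<Rightarrow> (complex mat \<Rightarrow> 'k) \<Rightarrow> 'k mat" where
  "rep_ext W d \<rho> a = mat d d (\<lambda>(i, j). \<Sum>w \<in> W. a w * \<rho> w $$ (i, j))"

end

theory Submission
  imports Defs
begin

text \<open>
  Proof of Proposition 2.3. Let \<open>\<chi> = \<epsilon>\<eta>\<close>, a character with \<open>\<chi>\<^sup>2 = 1\<close>.

  \<^item> Existence of the form: if \<open>P\<close> intertwines \<open>\<rho>\<^sup>* \<otimes> \<epsilon>\<close> with \<open>\<rho> \<otimes> \<eta>\<close>, then \<open>Q = P\<^sup>-\<^sup>1\<close>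
    satisfies \<open>\<rho>(w)\<^sup>T Q \<rho>(w) = \<chi>(w) Q\<close>, so \<open>Q\<close> is the Gram matrix of a nondegenerate
    \<open>\<chi>\<close>-invariant form.
  \<^item> Uniqueness of the form: for two such forms \<open>B, B'\<close> with \<open>B\<close> nondegenerate, \<open>B\<^sup>-\<^sup>1 B'\<close>
    commutes with \<open>\<rho>\<close>, hence is a scalar because \<open>\<rho>\<close> is absolutely irreducible.
  \<^item> Uniqueness of \<open>\<eta>\<close>: a reflection \<open>s\<close> has determinant \<open>-1\<close> (Sylvester's identity for
    \<open>s = 1 + u c\<^sup>T\<close>); if \<open>\<rho>(s) \<noteq> \<plusminus>1\<close> every \<open>\<eta> \<in> X(\<rho>)\<close> has \<open>\<eta>(s) = 1\<close>, and if \<open>\<rho>(s)\<close> is a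
    scalar the isomorphism determines \<open>\<eta>(s)\<close>. Reflections generate \<open>W\<close>.
  \<^item> \<open>\<rho>(\<H>') \<subseteq> \<o>\<s>\<p>\<close>: every reflection acts as an infinitesimal similitude of the form
    (a scalar, or a skew involution); these form a Lie algebra whose commutators are skew
    and traceless.
  \<^item> Hyperbolicity: for \<open>dim \<rho> > 1\<close> some reflection acts by an involution \<open>S \<noteq> \<plusminus>1\<close> with
    \<open>\<langle>Sx,Sy\<rangle> = -\<langle>x,y\<rangle>\<close>; its eigenspaces are totally isotropic and in duality, and a dual
    basis of them is a hyperbolic basis, built one pair at a time.
\<close>

lemma right_inverse_unique:
  fixes w v y :: "'a::semiring_1 mat"
  assumes "w \<in> carrier_mat n n" "v \<in> carrier_mat n n" "y \<in> carrier_mat n n"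
    and "y * w = 1\<^sub>m n" "w * v = 1\<^sub>m n"
  shows "v = y"
proof -
  have "v = (y * w) * v" using assms(2,4) by simp
  also have "\<dots> = y * (w * v)" using assms(1-3) by (intro assoc_mult_mat)
  also have "\<dots> = y" using assms by simp
  finally show ?thesis .
qed

lemma grp_inv_eqI:
  assumes G: "finite_mat_group n W" and w: "w \<in> W" and y: "y \<in> W" "w * y = 1\<^sub>m n"
  shows "grp_inv n W w = y"
proof -
  have sub: "W \<subseteq> carrier_mat n n" using G unfolding finite_mat_group_def by auto
  obtain y0 where y0: "y0 \<in> W" "w * y0 = 1\<^sub>m n" "y0 * w = 1\<^sub>m n"
    using G w unfolding finite_mat_group_def by blast
  have uniq: "v = y0" if "v \<in> W" "w * v = 1\<^sub>m n" for v
    using right_inverse_unique[of w n v y0] that y0 w sub by blast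
  have "grp_inv n W w = y0"
    unfolding grp_inv_def using y0 uniq by blast
  with uniq[OF y] show ?thesis by simp
qed

lemma grp_inv_props:
  assumes G: "finite_mat_group n W" and w: "w \<in> W"
  shows "grp_inv n W w \<in> W" "w * grp_inv n W w = 1\<^sub>m n" "grp_inv n W w * w = 1\<^sub>m n"
proof -
  obtain y where y: "y \<in> W" "w * y = 1\<^sub>m n" "y * w = 1\<^sub>m n"
    using G w unfolding finite_mat_group_def by blast
  with grp_inv_eqI[OF G w] show "grp_inv n W w \<in> W" "w * grp_inv n W w = 1\<^sub>m n"
    "grp_inv n W w * w = 1\<^sub>m n" by simp_all
qed

lemma grp_inv_grp_inv:
  assumes G: "finite_mat_group n W" and w: "w \<in> W"
  shows "grp_inv n W (grp_inv n W w) = w"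
  using grp_inv_eqI[OF G grp_inv_props(1)[OF G w] w grp_inv_props(3)[OF G w]] .

lemma reflection_induct[consumes 2, case_names one step]:
  assumes W: "finite_reflection_group n W" and w: "w \<in> W"
    and base: "P (1\<^sub>m n)"
    and step: "\<And>s x. s \<in> reflections n W \<Longrightarrow> x \<in> W \<Longrightarrow> P x \<Longrightarrow> P (s * x)"
  shows "P w"
proof -
  have gen: "W = mat_monoid_gen n (reflections n W)"
    using W unfolding finite_reflection_group_def by auto
  from w have "w \<in> mat_monoid_gen n (reflections n W)" using gen by simp
  then show ?thesis
  proof (induction rule: mat_monoid_gen.induct)
    case one then show ?case by (rule base)
  next
    case (gen s x) then show ?case using step \<open>W = _\<close> by auto
  qed
qed

lemma rep_carrier: "is_rep n W d \<rho> \<Longrightarrow> w \<in> W \<Longrightarrow> \<rho> w \<in> carrier_mat d d"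
  unfolding is_rep_def by blast

lemma rep_mult: "is_rep n W d \<rho> \<Longrightarrow> x \<in> W \<Longrightarrow> y \<in> W \<Longrightarrow> \<rho> (x * y) = \<rho> x * \<rho> y"
  unfolding is_rep_def by blast

lemma rep_grp_inv:
  assumes G: "finite_mat_group n W" and R: "is_rep n W d \<rho>" and w: "w \<in> W"
  shows "\<rho> w * \<rho> (grp_inv n W w) = 1\<^sub>m d" "\<rho> (grp_inv n W w) * \<rho> w = 1\<^sub>m d"
  using R grp_inv_props[OF G w] w unfolding is_rep_def by metis+

lemma sign_char_sq: "(sign_char w :: 'k::field) * sign_char w = 1"
  unfolding sign_char_def by simp

lemma sign_char_grp_inv:
  assumes G: "finite_mat_group n W" and w: "w \<in> W"
  shows "(sign_char (grp_inv n W w) :: 'k::field) = sign_char w"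
proof -
  have "W \<subseteq> carrier_mat n n" using G unfolding finite_mat_group_def by auto
  then have "det w * det (grp_inv n W w) = 1"
    using det_mult[of w n "grp_inv n W w"] grp_inv_props[OF G w] w by auto
  then have "det w = 1 \<longleftrightarrow> det (grp_inv n W w) = 1" by auto
  then show ?thesis unfolding sign_char_def by simp
qed

lemma sign_hom_sq: "sign_hom W \<eta> \<Longrightarrow> w \<in> W \<Longrightarrow> \<eta> w * \<eta> w = (1::'k::field)"
  unfolding sign_hom_def by auto

lemma sign_hom_one:
  assumes G: "finite_mat_group n W" and h: "sign_hom W \<eta>"
  shows "\<eta> (1\<^sub>m n) = (1::'k::field)"
proof -
  have one: "1\<^sub>m n \<in> W" using G unfolding finite_mat_group_def by auto
  then have "\<eta> (1\<^sub>m n) = \<eta> (1\<^sub>m n) * \<eta> (1\<^sub>m n)" using h unfolding sign_hom_def by force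
  then show ?thesis using sign_hom_sq[OF h one] by simp
qed

lemma sign_hom_grp_inv:
  assumes G: "finite_mat_group n W" and h: "sign_hom W \<eta>" and w: "w \<in> W"
  shows "\<eta> (grp_inv n W w) = (\<eta> w :: 'k::field)"
proof -
  have "\<eta> w * \<eta> (grp_inv n W w) = 1"
    using h grp_inv_props[OF G w] w sign_hom_one[OF G h] unfolding sign_hom_def by metis
  then show ?thesis using sign_hom_sq[OF h w] by (metis mult.left_commute mult_1_right)
qed

section \<open>Reflections have determinant \<open>-1\<close>\<close>

text \<open>Sylvester's determinant identity \<open>det (1 + U C) = det (1 + C U)\<close>, obtained by factoring
  the block matrix \<open>[1, U; -C, 1]\<close> in two ways into triangular block matrices.\<close>
lemma det_one_plus_mult_comm:
  fixes U C :: "'a::idom mat"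
  assumes U: "U \<in> carrier_mat n m" and C: "C \<in> carrier_mat m n"
  shows "det (1\<^sub>m n + U * C) = det (1\<^sub>m m + C * U)"
proof -
  define L where "L = four_block_mat (1\<^sub>m n) (0\<^sub>m n m) (- C) (1\<^sub>m m)"
  define R1 where "R1 = four_block_mat (1\<^sub>m n) U (0\<^sub>m m n) (1\<^sub>m m + C * U)"
  define R2 where "R2 = four_block_mat (1\<^sub>m n + U * C) U (0\<^sub>m m n) (1\<^sub>m m)"
  have LC: "L \<in> carrier_mat (n + m) (n + m)" and R1C: "R1 \<in> carrier_mat (n + m) (n + m)"
    and R2C: "R2 \<in> carrier_mat (n + m) (n + m)"
    unfolding L_def R1_def R2_def using U C by (auto intro!: four_block_carrier_mat)
  have "L * R1 = four_block_mat (1\<^sub>m n) U (- C) (1\<^sub>m m)"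
  proof -
    have "L * R1 = four_block_mat (1\<^sub>m n * 1\<^sub>m n + 0\<^sub>m n m * 0\<^sub>m m n)
        (1\<^sub>m n * U + 0\<^sub>m n m * (1\<^sub>m m + C * U))
        (- C * 1\<^sub>m n + 1\<^sub>m m * 0\<^sub>m m n) (- C * U + 1\<^sub>m m * (1\<^sub>m m + C * U))"
      unfolding L_def R1_def by (rule mult_four_block_mat) (use U C in auto)
    moreover have "- C * U + 1\<^sub>m m * (1\<^sub>m m + C * U) = 1\<^sub>m m"
      by (rule eq_matI) (use U C in auto)
    ultimately show ?thesis using U C by simp
  qed
  moreover have "R2 * L = four_block_mat (1\<^sub>m n) U (- C) (1\<^sub>m m)"
  proof -
    have "R2 * L = four_block_mat ((1\<^sub>m n + U * C) * 1\<^sub>m n + U * - C)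
        ((1\<^sub>m n + U * C) * 0\<^sub>m n m + U * 1\<^sub>m m)
        (0\<^sub>m m n * 1\<^sub>m n + 1\<^sub>m m * - C) (0\<^sub>m m n * 0\<^sub>m n m + 1\<^sub>m m * 1\<^sub>m m)"
      unfolding L_def R2_def by (rule mult_four_block_mat) (use U C in auto)
    moreover have "(1\<^sub>m n + U * C) * 1\<^sub>m n + U * - C = 1\<^sub>m n"
      by (rule eq_matI) (use U C in auto)
    ultimately show ?thesis using U C by simp
  qed
  ultimately have "det L * det R1 = det R2 * det L"
    using det_mult[OF LC R1C] det_mult[OF R2C LC] by simp
  moreover have "det L = 1"
    unfolding L_def by (subst det_four_block_mat_upper_right_zero) (use C in auto)
  moreover have "det R1 = det (1\<^sub>m m + C * U)"
    unfolding R1_def by (subst det_four_block_mat_lower_left_zero) (use U C in auto)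
  moreover have "det R2 = det (1\<^sub>m n + U * C)"
    unfolding R2_def by (subst det_four_block_mat_lower_left_zero) (use U C in auto)
  ultimately show ?thesis by simp
qed


lemma exists_dual_vector:
  fixes c :: "'a::field vec"
  assumes c: "c \<in> carrier_vec n" "c \<noteq> 0\<^sub>v n"
  obtains w where "w \<in> carrier_vec n" "c \<bullet> w = 1"
proof -
  from c obtain j where j: "j < n" "c $ j \<noteq> 0"
    by (metis carrier_vecD eq_vecI index_zero_vec(1) index_zero_vec(2))
  show ?thesis
    by (rule that[of "(1 / c $ j) \<cdot>\<^sub>v unit_vec n j"]) (use c j in \<open>auto simp: scalar_prod_right_unit\<close>)
qed

lemma rank_one_of_kernel:
  fixes M :: "'a::field mat"
  assumes M: "M \<in> carrier_mat r n" and c: "c \<in> carrier_vec n"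
    and w: "w \<in> carrier_vec n" "c \<bullet> w = 1"
    and ker: "\<And>v. v \<in> carrier_vec n \<Longrightarrow> c \<bullet> v = 0 \<Longrightarrow> M *\<^sub>v v = 0\<^sub>v r"
    and v: "v \<in> carrier_vec n"
  shows "M *\<^sub>v v = (c \<bullet> v) \<cdot>\<^sub>v (M *\<^sub>v w)"
proof -
  define z where "z = v - (c \<bullet> v) \<cdot>\<^sub>v w"
  have z: "z \<in> carrier_vec n" unfolding z_def using v w by simp
  have "c \<bullet> z = c \<bullet> v - (c \<bullet> v) * (c \<bullet> w)"
    unfolding z_def using c v w by (simp add: scalar_prod_minus_distrib)
  then have "M *\<^sub>v z = 0\<^sub>v r" using ker[OF z] w by simp
  moreover have "M *\<^sub>v z = M *\<^sub>v v - (c \<bullet> v) \<cdot>\<^sub>v (M *\<^sub>v w)"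
    unfolding z_def using M v w by (simp add: mult_minus_distrib_mat_vec mult_mat_vec)
  ultimately have diff: "M *\<^sub>v v - (c \<bullet> v) \<cdot>\<^sub>v (M *\<^sub>v w) = 0\<^sub>v r" by simp
  show ?thesis
  proof (rule eq_vecI)
    fix i assume "i < dim_vec ((c \<bullet> v) \<cdot>\<^sub>v (M *\<^sub>v w))"
    then have "i < r" using M by simp
    with arg_cong[OF diff, of "\<lambda>x. x $ i"] show "(M *\<^sub>v v) $ i = ((c \<bullet> v) \<cdot>\<^sub>v (M *\<^sub>v w)) $ i"
      using M by simp
  qed (use M in simp)
qed

lemma reflection_rank_one:
  assumes r: "is_reflection n s"
  obtains u c where "u \<in> carrier_vec n" "c \<in> carrier_vec n" "c \<bullet> u = -2"
    "\<And>i k. i < n \<Longrightarrow> k < n \<Longrightarrow> s $$ (i, k) = 1\<^sub>m n $$ (i, k) + u $ i * c $ k"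
proof -
  from r have sC: "s \<in> carrier_mat n n" and ss: "s * s = 1\<^sub>m n" and s1: "s \<noteq> 1\<^sub>m n"
    unfolding is_reflection_def by auto
  from r obtain c where c: "c \<in> carrier_vec n" "c \<noteq> 0\<^sub>v n"
    and fix_hyp: "\<And>v. v \<in> carrier_vec n \<Longrightarrow> c \<bullet> v = 0 \<Longrightarrow> s *\<^sub>v v = v"
    unfolding is_reflection_def by auto
  obtain w where w: "w \<in> carrier_vec n" "c \<bullet> w = 1" using exists_dual_vector[OF c] .
  define M where "M = s - 1\<^sub>m n"
  define u where "u = M *\<^sub>v w"
  have MC: "M \<in> carrier_mat n n" unfolding M_def by (rule minus_carrier_mat) simp
  have uC: "u \<in> carrier_vec n" unfolding u_def using MC w by simp
  have Mv: "M *\<^sub>v v = s *\<^sub>v v - v" if "v \<in> carrier_vec n" for v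
    unfolding M_def using sC that by (simp add: minus_mult_distrib_mat_vec)
  have M_rank_one: "M *\<^sub>v v = (c \<bullet> v) \<cdot>\<^sub>v u" if "v \<in> carrier_vec n" for v
    unfolding u_def using rank_one_of_kernel[OF MC c(1) w _ that] Mv fix_hyp by simp
  have entries: "s $$ (i, k) = 1\<^sub>m n $$ (i, k) + u $ i * c $ k" if "i < n" "k < n" for i k
  proof -
    have "M $$ (i, k) = (M *\<^sub>v unit_vec n k) $ i" using MC that by simp
    also have "\<dots> = c $ k * u $ i"
      using M_rank_one[of "unit_vec n k"] that c uC by (simp add: scalar_prod_right_unit)
    finally have "s $$ (i, k) - 1\<^sub>m n $$ (i, k) = c $ k * u $ i"
      unfolding M_def using sC that by simp
    then show ?thesis by (simp only: diff_eq_eq mult.commute add.commute)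
  qed
  have "u \<noteq> 0\<^sub>v n"
  proof
    assume "u = 0\<^sub>v n"
    then have "s = 1\<^sub>m n" using entries sC by (intro eq_matI) auto
    with s1 show False by simp
  qed
  then obtain i where i: "i < n" "u $ i \<noteq> 0"
    using uC by (metis carrier_vecD eq_vecI index_zero_vec(1) index_zero_vec(2))
  have "s *\<^sub>v u = s *\<^sub>v (s *\<^sub>v w) - s *\<^sub>v w"
    unfolding u_def Mv[OF w(1)] using sC w by (simp add: mult_minus_distrib_mat_vec)
  also have "s *\<^sub>v (s *\<^sub>v w) = w"
    using ss sC w by (simp add: assoc_mult_mat_vec[symmetric])
  finally have su_neg: "s *\<^sub>v u = - u"
    unfolding u_def Mv[OF w(1)] using sC w by (intro eq_vecI) auto
  have "(M *\<^sub>v u) $ i = (s *\<^sub>v u) $ i - u $ i" using Mv[OF uC] i sC uC by simp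
  then have "(c \<bullet> u) * u $ i = - u $ i - u $ i"
    unfolding M_rank_one[OF uC] su_neg using i uC by simp
  then have "(c \<bullet> u + 2) * u $ i = 0" by (simp add: algebra_simps)
  with i have "c \<bullet> u = -2" by (simp add: add_eq_0_iff2)
  with uC c entries show ?thesis by (intro that) auto
qed

text \<open>Hence \<open>det s = det (1 + c\<^sup>T u) = 1 + c \<bullet> u = -1\<close>.\<close>
lemma reflection_det:
  assumes r: "is_reflection n s"
  shows "det s = -1"
proof -
  obtain u c where uc: "u \<in> carrier_vec n" "c \<in> carrier_vec n" "c \<bullet> u = -2"
    and entries: "\<And>i k. i < n \<Longrightarrow> k < n \<Longrightarrow> s $$ (i, k) = 1\<^sub>m n $$ (i, k) + u $ i * c $ k"
    using reflection_rank_one[OF r] by blast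
  have sC: "s \<in> carrier_mat n n" using r unfolding is_reflection_def by auto
  define U where "U = mat n 1 (\<lambda>(i, _). u $ i)"
  define C where "C = mat 1 n (\<lambda>(_, k). c $ k)"
  have UC: "U \<in> carrier_mat n 1" and CC: "C \<in> carrier_mat 1 n" unfolding U_def C_def by auto
  have "s = 1\<^sub>m n + U * C"
    using sC entries by (intro eq_matI) (auto simp: U_def C_def scalar_prod_def)
  moreover have "1\<^sub>m 1 + C * U = mat 1 1 (\<lambda>_. -1)"
    using uc by (intro eq_matI) (auto simp: U_def C_def scalar_prod_def)
  ultimately show ?thesis
    using det_one_plus_mult_comm[OF UC CC] by (simp add: det_single)
qed

lemma smult_smult_mat: "(a::'a::comm_ring_1) \<cdot>\<^sub>m (b \<cdot>\<^sub>m A) = (a * b) \<cdot>\<^sub>m A"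
  by (rule eq_matI) auto

lemma one_smult_mat': "(1::'a::ring_1) \<cdot>\<^sub>m A = A"
  by (rule eq_matI) auto

lemma smult_mat_mult_vec:
  "A \<in> carrier_mat nr nc \<Longrightarrow> v \<in> carrier_vec nc \<Longrightarrow> (c \<cdot>\<^sub>m A) *\<^sub>v v = c \<cdot>\<^sub>v (A *\<^sub>v (v::'a::comm_ring_1 vec))"
  by (rule eq_vecI) (auto simp: scalar_prod_def sum_distrib_left ac_simps intro!: sum.cong)

context
  fixes d :: nat and B :: "'k::field mat"
  assumes B: "B \<in> carrier_mat d d"
begin

lemma bform_add_left:
  "u \<in> carrier_vec d \<Longrightarrow> v \<in> carrier_vec d \<Longrightarrow> w \<in> carrier_vec d \<Longrightarrow>
   bform B (u + v) w = bform B u w + bform B v w"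
  unfolding bform_def using B by (simp add: add_scalar_prod_distrib[of _ d])

lemma bform_add_right:
  "u \<in> carrier_vec d \<Longrightarrow> v \<in> carrier_vec d \<Longrightarrow> w \<in> carrier_vec d \<Longrightarrow>
   bform B w (u + v) = bform B w u + bform B w v"
  unfolding bform_def using B by (simp add: mult_add_distrib_mat_vec[of B d d] scalar_prod_add_distrib[of _ d])

lemma bform_smult_left:
  "u \<in> carrier_vec d \<Longrightarrow> w \<in> carrier_vec d \<Longrightarrow> bform B (c \<cdot>\<^sub>v u) w = c * bform B u w"
  unfolding bform_def using B by simp

lemma bform_smult_right:
  "u \<in> carrier_vec d \<Longrightarrow> w \<in> carrier_vec d \<Longrightarrow> bform B w (c \<cdot>\<^sub>v u) = c * bform B w u"
  unfolding bform_def using B by (simp add: mult_mat_vec[of B d d])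

lemma bform_neg_left:
  "u \<in> carrier_vec d \<Longrightarrow> w \<in> carrier_vec d \<Longrightarrow> bform B (- u) w = - bform B u w"
  unfolding bform_def using B by simp

lemma bform_neg_right:
  "u \<in> carrier_vec d \<Longrightarrow> w \<in> carrier_vec d \<Longrightarrow> bform B w (- u) = - bform B w u"
  using bform_smult_right[of u w "-1"] by (simp add: uminus_vec_def smult_vec_def)

lemma bform_smult_mat:
  "x \<in> carrier_vec d \<Longrightarrow> y \<in> carrier_vec d \<Longrightarrow> bform (a \<cdot>\<^sub>m B) x y = a * bform B x y"
  unfolding bform_def using B by (simp add: smult_mat_mult_vec)

lemma bform_unit:
  "i < d \<Longrightarrow> j < d \<Longrightarrow> bform B (unit_vec d i) (unit_vec d j) = B $$ (i, j)"
  unfolding bform_def using B by (subst scalar_prod_left_unit) auto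

lemma bform_transform:
  assumes R: "R \<in> carrier_mat d d" and x: "x \<in> carrier_vec d" and y: "y \<in> carrier_vec d"
  shows "bform B (R *\<^sub>v x) (R *\<^sub>v y) = bform (R\<^sup>T * B * R) x y"
proof -
  have z: "B *\<^sub>v (R *\<^sub>v y) \<in> carrier_vec d" using B R y by simp
  have "(R *\<^sub>v x) \<bullet> (B *\<^sub>v (R *\<^sub>v y)) = (R\<^sup>T *\<^sub>v (B *\<^sub>v (R *\<^sub>v y))) \<bullet> x"
    using transpose_vec_mult_scalar[OF R x z] z R x by (simp add: comm_scalar_prod[of _ d])
  also have "\<dots> = x \<bullet> (R\<^sup>T *\<^sub>v (B *\<^sub>v (R *\<^sub>v y)))"
    using z R x by (intro comm_scalar_prod) auto
  also have "R\<^sup>T *\<^sub>v (B *\<^sub>v (R *\<^sub>v y)) = (R\<^sup>T * B * R) *\<^sub>v y"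
    using R B y by (simp add: assoc_mult_mat_vec[of _ d d _ d])
  finally show ?thesis unfolding bform_def .
qed

end

lemma bform_eq_mat:
  assumes "A \<in> carrier_mat d d" "B \<in> carrier_mat d d"
    and "\<And>x y. x \<in> carrier_vec d \<Longrightarrow> y \<in> carrier_vec d \<Longrightarrow> bform A x y = (bform B x y :: 'k::field)"
  shows "A = B"
proof (rule eq_matI)
  fix i j assume "i < dim_row B" "j < dim_col B"
  then show "A $$ (i, j) = B $$ (i, j)"
    using assms bform_unit[of A d i j] bform_unit[of B d i j] by auto
qed (use assms in auto)

lemma invariant_form_iff_gram:
  assumes R: "is_rep n W d \<rho>" and B: "B \<in> carrier_mat d d"
  shows "invariant_form W d \<rho> \<chi> B \<longleftrightarrow>
    (\<forall>w \<in> W. (\<rho> w)\<^sup>T * B * \<rho> w = \<chi> w \<cdot>\<^sub>m (B :: 'k::field mat))"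
proof -
  have "(\<forall>x \<in> carrier_vec d. \<forall>y \<in> carrier_vec d. bform B (\<rho> w *\<^sub>v x) (\<rho> w *\<^sub>v y) = \<chi> w * bform B x y)
      \<longleftrightarrow> (\<rho> w)\<^sup>T * B * \<rho> w = \<chi> w \<cdot>\<^sub>m B" if w: "w \<in> W" for w
    using bform_eq_mat[of "(\<rho> w)\<^sup>T * B * \<rho> w" d "\<chi> w \<cdot>\<^sub>m B"] rep_carrier[OF R w] B
      bform_transform[OF B rep_carrier[OF R w]] bform_smult_mat[OF B] by auto
  then show ?thesis unfolding invariant_form_def using B by auto
qed

lemma invariant_form_gram:
  assumes R: "is_rep n W d \<rho>" and X: "invariant_form W d \<rho> \<chi> X" and w: "w \<in> W"
  shows "(\<rho> w)\<^sup>T * X * \<rho> w = \<chi> w \<cdot>\<^sub>m (X :: 'k::field mat)"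
proof -
  have "X \<in> carrier_mat d d" using X unfolding invariant_form_def by auto
  with R X w show ?thesis using invariant_form_iff_gram by blast
qed

lemma nondegenerate_if_right_inverse:
  assumes Q: "Q \<in> carrier_mat d d" and P: "P \<in> carrier_mat d d" and QP: "Q * P = 1\<^sub>m d"
  shows "nondegenerate d (Q :: 'k::field mat)"
  unfolding nondegenerate_def
proof (intro ballI impI)
  fix x :: "'k vec" assume x: "x \<in> carrier_vec d" and zero: "\<forall>y \<in> carrier_vec d. bform Q x y = 0"
  show "x = 0\<^sub>v d"
  proof (rule eq_vecI)
    fix i assume i: "i < dim_vec (0\<^sub>v d :: 'k vec)"
    have "Q *\<^sub>v (P *\<^sub>v unit_vec d i) = unit_vec d i"
      using Q P QP by (simp add: assoc_mult_mat_vec[symmetric, of Q d d P d])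
    then have "bform Q x (P *\<^sub>v unit_vec d i) = x $ i" unfolding bform_def using x i by simp
    then show "x $ i = 0\<^sub>v d $ i" using zero P i by simp
  qed (use x in simp)
qed

lemma nondegenerate_inverse:
  assumes B: "B \<in> carrier_mat d d" and nd: "nondegenerate d (B :: 'k::field mat)"
  obtains Bi where "Bi \<in> carrier_mat d d" "B * Bi = 1\<^sub>m d" "Bi * B = 1\<^sub>m d"
proof -
  have "det B \<noteq> 0"
  proof
    assume "det B = 0"
    then have "det B\<^sup>T = 0" using det_transpose[OF B] by simp
    then obtain v where v: "v \<in> carrier_vec d" "v \<noteq> 0\<^sub>v d" "B\<^sup>T *\<^sub>v v = 0\<^sub>v d"
      using det_0_iff_vec_prod_zero_field[of "B\<^sup>T" d] B by auto
    have "bform B v y = (B\<^sup>T *\<^sub>v v) \<bullet> y" if "y \<in> carrier_vec d" for y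
      unfolding bform_def using transpose_vec_mult_scalar[OF B that v(1)] by simp
    with nd v show False unfolding nondegenerate_def by auto
  qed
  then show ?thesis
    using adj_mat[OF B] B
    by (intro that[of "(1 / det B) \<cdot>\<^sub>m adj_mat B"])
      (auto simp: mult_smult_distrib[of _ d d _ d] mult_smult_assoc_mat[of _ d d _ d] smult_smult_mat one_smult_mat')
qed

section \<open>The invariant form attached to \<open>\<rho>\<^sup>* \<otimes> \<epsilon> \<simeq> \<rho> \<otimes> \<eta>\<close>\<close>

lemma invertible_mat_inverse:
  assumes P: "P \<in> carrier_mat d d" and inv: "invertible_mat (P :: 'k::field mat)"
  obtains Q where "Q \<in> carrier_mat d d" "P * Q = 1\<^sub>m d" "Q * P = 1\<^sub>m d"
proof -
  from inv obtain Q where PQ: "P * Q = 1\<^sub>m (dim_row P)" and QP: "Q * P = 1\<^sub>m (dim_row Q)"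
    unfolding invertible_mat_def inverts_mat_def by auto
  have rows: "dim_row Q = d" using arg_cong[OF QP, of dim_col] P by auto
  have cols: "dim_col Q = d" using arg_cong[OF PQ, of dim_col] P by auto
  have "Q \<in> carrier_mat d d" using rows cols by (intro carrier_matI)
  moreover have "P * Q = 1\<^sub>m d" using PQ by (simp only: carrier_matD(1)[OF P])
  moreover have "Q * P = 1\<^sub>m d" using QP by (simp only: rows)
  ultimately show ?thesis by (rule that)
qed

lemma dual_iso_transpose:
  assumes G: "finite_mat_group n W" and R: "is_rep n W d \<rho>" and h: "sign_hom W \<eta>"
    and iso: "rep_iso W d (twist (dual_rep n W \<rho>) sign_char) (twist \<rho> (\<eta> :: complex mat \<Rightarrow> 'k::field))"
  obtains P Q where "P \<in> carrier_mat d d" "Q \<in> carrier_mat d d" "P * Q = 1\<^sub>m d" "Q * P = 1\<^sub>m d"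
    "\<And>w. w \<in> W \<Longrightarrow> (\<rho> w)\<^sup>T = (sign_char w * \<eta> w) \<cdot>\<^sub>m (Q * \<rho> (grp_inv n W w) * P)"
proof -
  from iso obtain P where P: "P \<in> carrier_mat d d" "invertible_mat P"
    and intertwine: "\<And>w. w \<in> W \<Longrightarrow> P * twist (dual_rep n W \<rho>) sign_char w = twist \<rho> \<eta> w * P"
    unfolding rep_iso_def by auto
  obtain Q where Q: "Q \<in> carrier_mat d d" "P * Q = 1\<^sub>m d" "Q * P = 1\<^sub>m d"
    using invertible_mat_inverse[OF P] .
  have "(\<rho> w)\<^sup>T = (sign_char w * \<eta> w) \<cdot>\<^sub>m (Q * \<rho> (grp_inv n W w) * P)" if w: "w \<in> W" for w
  proof -
    define v where "v = grp_inv n W w"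
    define e where "e = (sign_char w :: 'k)"
    define t where "t = \<eta> w"
    have v: "v \<in> W" unfolding v_def using grp_inv_props[OF G w] by simp
    have Rw: "\<rho> w \<in> carrier_mat d d" and Rv: "\<rho> v \<in> carrier_mat d d"
      using rep_carrier[OF R] w v by auto
    have ev: "sign_char v = e" unfolding e_def v_def by (rule sign_char_grp_inv[OF G w])
    have tv: "\<eta> v = t" unfolding t_def v_def by (rule sign_hom_grp_inv[OF G h w])
    have "P * (e \<cdot>\<^sub>m (\<rho> w)\<^sup>T) = (t \<cdot>\<^sub>m \<rho> v) * P"
      using intertwine[OF v] unfolding twist_def dual_rep_def ev tv
      unfolding v_def grp_inv_grp_inv[OF G w] .
    then have "Q * (P * (e \<cdot>\<^sub>m (\<rho> w)\<^sup>T)) = Q * ((t \<cdot>\<^sub>m \<rho> v) * P)" by simp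
    moreover have "Q * (P * (e \<cdot>\<^sub>m (\<rho> w)\<^sup>T)) = (Q * P) * (e \<cdot>\<^sub>m (\<rho> w)\<^sup>T)"
      using Q P Rw by (intro assoc_mult_mat[symmetric]) auto
    moreover have "Q * ((t \<cdot>\<^sub>m \<rho> v) * P) = t \<cdot>\<^sub>m (Q * \<rho> v * P)"
    proof -
      have "Q * ((t \<cdot>\<^sub>m \<rho> v) * P) = t \<cdot>\<^sub>m (Q * (\<rho> v * P))"
        using mult_smult_assoc_mat[OF Rv P(1)] mult_smult_distrib[of Q d d "\<rho> v * P" d] Q Rv P by simp
      also have "Q * (\<rho> v * P) = Q * \<rho> v * P" using Q Rv P by (intro assoc_mult_mat[symmetric]) auto
      finally show ?thesis .
    qed
    ultimately have "e \<cdot>\<^sub>m (\<rho> w)\<^sup>T = t \<cdot>\<^sub>m (Q * \<rho> v * P)" using Q Rw by simp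
    then have "e \<cdot>\<^sub>m (e \<cdot>\<^sub>m (\<rho> w)\<^sup>T) = (e * t) \<cdot>\<^sub>m (Q * \<rho> v * P)" by (simp add: smult_smult_mat)
    moreover have "e * e = 1" unfolding e_def by (rule sign_char_sq)
    ultimately show ?thesis unfolding e_def t_def v_def by (simp add: smult_smult_mat one_smult_mat')
  qed
  with P Q show ?thesis by (intro that) auto
qed

text \<open>The inverse \<open>Q\<close> of the intertwiner is the Gram matrix of a nondegenerate form which
  transforms under \<open>W\<close> by the character \<open>\<epsilon>\<eta>\<close>.\<close>
lemma exists_invariant_form:
  assumes G: "finite_mat_group n W" and R: "is_rep n W d \<rho>" and h: "sign_hom W \<eta>"
    and iso: "rep_iso W d (twist (dual_rep n W \<rho>) sign_char) (twist \<rho> (\<eta> :: complex mat \<Rightarrow> 'k::field))"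
  shows "\<exists>B. invariant_form W d \<rho> (\<lambda>w. sign_char w * \<eta> w) B \<and> nondegenerate d B"
proof -
  obtain P Q where P: "P \<in> carrier_mat d d" and Q: "Q \<in> carrier_mat d d"
    and PQ: "P * Q = 1\<^sub>m d" and QP: "Q * P = 1\<^sub>m d"
    and transp: "\<And>w. w \<in> W \<Longrightarrow> (\<rho> w)\<^sup>T = (sign_char w * \<eta> w) \<cdot>\<^sub>m (Q * \<rho> (grp_inv n W w) * P)"
    using dual_iso_transpose[OF G R h iso] by blast
  have gram: "\<forall>w \<in> W. (\<rho> w)\<^sup>T * Q * \<rho> w = (sign_char w * \<eta> w) \<cdot>\<^sub>m Q"
  proof
    fix w assume w: "w \<in> W"
    define v where "v = grp_inv n W w"
    have Rw: "\<rho> w \<in> carrier_mat d d" and Rv: "\<rho> v \<in> carrier_mat d d"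
      using rep_carrier[OF R] w grp_inv_props[OF G w] unfolding v_def by auto
    define c where "c = (sign_char w * \<eta> w :: 'k)"
    have QRP: "Q * \<rho> v * P \<in> carrier_mat d d" using Q Rv P by simp
    have "(\<rho> w)\<^sup>T * Q * \<rho> w = (c \<cdot>\<^sub>m (Q * \<rho> v * P)) * Q * \<rho> w"
      using transp[OF w] unfolding v_def c_def by simp
    also have "\<dots> = c \<cdot>\<^sub>m (Q * \<rho> v * P * Q * \<rho> w)"
      using mult_smult_assoc_mat[OF QRP Q] mult_smult_assoc_mat[of "Q * \<rho> v * P * Q" d d "\<rho> w" d] QRP Q Rw
      by simp
    also have "Q * \<rho> v * P * Q * \<rho> w = Q * (\<rho> v * ((P * Q) * \<rho> w))"
      using Q Rv P Rw by (simp add: assoc_mult_mat[of _ d d _ d _ d])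
    also have "\<dots> = Q" using PQ Rw Q rep_grp_inv(2)[OF G R w] unfolding v_def by simp
    finally show "(\<rho> w)\<^sup>T * Q * \<rho> w = (sign_char w * \<eta> w) \<cdot>\<^sub>m Q" unfolding c_def .
  qed
  have "invariant_form W d \<rho> (\<lambda>w. sign_char w * \<eta> w) Q"
    using invariant_form_iff_gram[OF R Q] gram by (rule iffD2)
  moreover have "nondegenerate d Q" by (rule nondegenerate_if_right_inverse[OF Q P QP])
  ultimately show ?thesis by blast
qed

section \<open>Uniqueness of the invariant form up to a scalar\<close>

lemma invariant_form_intertwines:
  assumes G: "finite_mat_group n W" and R: "is_rep n W d \<rho>"
    and X: "invariant_form W d \<rho> \<chi> X" and w: "w \<in> W"
  shows "X * \<rho> w = \<chi> w \<cdot>\<^sub>m ((\<rho> (grp_inv n W w))\<^sup>T * (X :: 'k::field mat))"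
proof -
  define Ri where "Ri = \<rho> (grp_inv n W w)"
  have XC: "X \<in> carrier_mat d d" using X unfolding invariant_form_def by auto
  have Rw: "\<rho> w \<in> carrier_mat d d" using rep_carrier[OF R w] .
  have RiC: "Ri \<in> carrier_mat d d" unfolding Ri_def using rep_carrier[OF R] grp_inv_props[OF G w] by auto
  have "Ri\<^sup>T * (\<rho> w)\<^sup>T = (\<rho> w * Ri)\<^sup>T" using transpose_mult[OF Rw RiC] by simp
  also have "\<dots> = 1\<^sub>m d" unfolding Ri_def rep_grp_inv(1)[OF G R w] by simp
  finally have inv_T: "Ri\<^sup>T * (\<rho> w)\<^sup>T = 1\<^sub>m d" .
  have gram: "(\<rho> w)\<^sup>T * X * \<rho> w = \<chi> w \<cdot>\<^sub>m X" using invariant_form_gram[OF R X w] .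
  have "X * \<rho> w = (Ri\<^sup>T * (\<rho> w)\<^sup>T) * (X * \<rho> w)" using inv_T XC Rw by simp
  also have "\<dots> = Ri\<^sup>T * ((\<rho> w)\<^sup>T * X * \<rho> w)"
    using XC Rw RiC by (simp add: assoc_mult_mat[of _ d d _ d _ d])
  also have "\<dots> = \<chi> w \<cdot>\<^sub>m (Ri\<^sup>T * X)" unfolding gram using XC RiC by (simp add: mult_smult_distrib[of _ d d _ d])
  finally show ?thesis unfolding Ri_def .
qed

text \<open>If \<open>B\<close> is nondegenerate, \<open>B\<^sup>-\<^sup>1 B'\<close> commutes with \<open>\<rho>\<close> for every other invariant
  form \<open>B'\<close> of the same character: both Gram matrices intertwine \<open>\<rho>\<close> with the same twisted
  contragredient, and \<open>\<chi>\<^sup>2 = 1\<close> makes the twists cancel.\<close>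
lemma invariant_forms_quotient_commutes:
  assumes G: "finite_mat_group n W" and R: "is_rep n W d \<rho>"
    and chi: "\<And>w. w \<in> W \<Longrightarrow> \<chi> w * \<chi> w = (1::'k::field)"
    and B: "invariant_form W d \<rho> \<chi> B" and B': "invariant_form W d \<rho> \<chi> B'"
    and Bi: "Bi \<in> carrier_mat d d" "B * Bi = 1\<^sub>m d" "Bi * B = 1\<^sub>m d"
    and w: "w \<in> W"
  shows "(Bi * B') * \<rho> w = \<rho> w * (Bi * B')"
proof -
  have BC: "B \<in> carrier_mat d d" and B'C: "B' \<in> carrier_mat d d"
    using B B' unfolding invariant_form_def by auto
  have BiB_cancel: "Bi * (B * X) = X" if "X \<in> carrier_mat d d" for X
    using Bi BC that by (simp add: assoc_mult_mat[symmetric, of _ d d _ d X d])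
  define Ri where "Ri = \<rho> (grp_inv n W w)"
  define c where "c = \<chi> w"
  have cc: "c * c = 1" unfolding c_def using chi[OF w] .
  have Rw: "\<rho> w \<in> carrier_mat d d" using rep_carrier[OF R w] .
  have RiT: "Ri\<^sup>T \<in> carrier_mat d d"
    unfolding Ri_def using rep_carrier[OF R] grp_inv_props[OF G w] by auto
  have B_Rw: "B * \<rho> w = c \<cdot>\<^sub>m (Ri\<^sup>T * B)" and B'_Rw: "B' * \<rho> w = c \<cdot>\<^sub>m (Ri\<^sup>T * B')"
    unfolding Ri_def c_def using invariant_form_intertwines[OF G R _ w] B B' by auto
  have Bi_RiT: "Bi * Ri\<^sup>T = c \<cdot>\<^sub>m (\<rho> w * Bi)"
  proof -
    have "\<rho> w * Bi = Bi * (B * \<rho> w) * Bi"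
      using Rw Bi BC by (simp add: assoc_mult_mat[of _ d d _ d _ d] BiB_cancel)
    also have "\<dots> = c \<cdot>\<^sub>m (Bi * Ri\<^sup>T * (B * Bi))"
      unfolding B_Rw using Bi BC RiT
      by (simp add: mult_smult_distrib[of _ d d _ d] mult_smult_assoc_mat[of _ d d _ d]
          assoc_mult_mat[of _ d d _ d _ d])
    also have "\<dots> = c \<cdot>\<^sub>m (Bi * Ri\<^sup>T)" using Bi RiT by simp
    finally show ?thesis using cc by (simp add: smult_smult_mat one_smult_mat')
  qed
  have "(Bi * B') * \<rho> w = Bi * (B' * \<rho> w)"
    using Bi B'C Rw by (simp add: assoc_mult_mat[of _ d d _ d _ d])
  also have "\<dots> = c \<cdot>\<^sub>m (Bi * Ri\<^sup>T * B')"
    unfolding B'_Rw using Bi B'C RiT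
    by (simp add: mult_smult_distrib[of _ d d _ d] assoc_mult_mat[of _ d d _ d _ d])
  also have "Bi * Ri\<^sup>T = c \<cdot>\<^sub>m (\<rho> w * Bi)" by (rule Bi_RiT)
  also have "c \<cdot>\<^sub>m (c \<cdot>\<^sub>m (\<rho> w * Bi) * B') = \<rho> w * (Bi * B')"
    using Bi B'C Rw cc
    by (simp add: mult_smult_assoc_mat[of _ d d _ d] smult_smult_mat one_smult_mat'
        assoc_mult_mat[of _ d d _ d _ d])
  finally show ?thesis .
qed

text \<open>By Schur's lemma over a splitting field, \<open>B\<^sup>-\<^sup>1 B'\<close> is a scalar, so the invariant
  form is unique up to a scalar.\<close>
lemma invariant_forms_proportional:
  assumes G: "finite_mat_group n W" and R: "is_rep n W d \<rho>"
    and k: "splitting_field_for TYPE('k::field) n W" and irr: "irreducible_rep n W d \<rho>"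
    and chi: "\<And>w. w \<in> W \<Longrightarrow> \<chi> w * \<chi> w = (1::'k)"
    and B: "invariant_form W d \<rho> \<chi> B" and nd: "nondegenerate d B"
    and B': "invariant_form W d \<rho> \<chi> B'"
  shows "\<exists>c. B' = c \<cdot>\<^sub>m B"
proof -
  have BC: "B \<in> carrier_mat d d" and B'C: "B' \<in> carrier_mat d d"
    using B B' unfolding invariant_form_def by auto
  obtain Bi where Bi: "Bi \<in> carrier_mat d d" "B * Bi = 1\<^sub>m d" "Bi * B = 1\<^sub>m d"
    using nondegenerate_inverse[OF BC nd] by blast
  have "Bi * B' \<in> carrier_mat d d" using Bi B'C by simp
  with k irr obtain c where "Bi * B' = c \<cdot>\<^sub>m 1\<^sub>m d"
    using invariant_forms_quotient_commutes[OF G R chi B B' Bi] unfolding splitting_field_for_def by blast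
  then have "B * (Bi * B') = c \<cdot>\<^sub>m B" using BC by (simp add: mult_smult_distrib[of _ d d _ d])
  moreover have "B * (Bi * B') = B'" using Bi BC B'C
    by (simp add: assoc_mult_mat[symmetric, of B d d Bi d B' d])
  ultimately show ?thesis by auto
qed

section \<open>Uniqueness of \<open>\<eta>\<close>\<close>

lemma conj_to_scalar:
  assumes P: "P \<in> carrier_mat d d" "invertible_mat (P :: 'k::field mat)"
    and X: "X \<in> carrier_mat d d" and eq: "P * X = (a \<cdot>\<^sub>m 1\<^sub>m d) * P"
  shows "X = a \<cdot>\<^sub>m 1\<^sub>m d"
proof -
  obtain Q where Q: "Q \<in> carrier_mat d d" "P * Q = 1\<^sub>m d" "Q * P = 1\<^sub>m d"
    using invertible_mat_inverse[OF P] .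
  have "X = (Q * P) * X" using Q X by simp
  also have "\<dots> = Q * (P * X)" using Q P X by (intro assoc_mult_mat) auto
  also have "\<dots> = Q * (a \<cdot>\<^sub>m P)" unfolding eq using P mult_smult_assoc_mat[of "1\<^sub>m d" d d P d a] by simp
  also have "\<dots> = a \<cdot>\<^sub>m (Q * P)" using Q P by (intro mult_smult_distrib) auto
  finally show ?thesis using Q by simp
qed

lemma twisted_dual_at_scalar:
  assumes G: "finite_mat_group n W" and R: "is_rep n W d \<rho>" and s: "s \<in> W"
    and scalar: "\<rho> s = \<sigma> \<cdot>\<^sub>m 1\<^sub>m d"
    and iso: "rep_iso W d (twist (dual_rep n W \<rho>) sign_char) (twist \<rho> (\<eta> :: complex mat \<Rightarrow> 'k::field))"
  shows "twist (dual_rep n W \<rho>) sign_char s = (\<eta> s * \<sigma>) \<cdot>\<^sub>m 1\<^sub>m d"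
proof -
  from iso s obtain P where P: "P \<in> carrier_mat d d" "invertible_mat P"
    and intertwine: "P * twist (dual_rep n W \<rho>) sign_char s = twist \<rho> \<eta> s * P"
    unfolding rep_iso_def by auto
  have "twist \<rho> \<eta> s = (\<eta> s * \<sigma>) \<cdot>\<^sub>m 1\<^sub>m d" unfolding twist_def scalar by (simp add: smult_smult_mat)
  moreover have "twist (dual_rep n W \<rho>) sign_char s \<in> carrier_mat d d"
    unfolding twist_def dual_rep_def using rep_carrier[OF R] grp_inv_props[OF G s] by auto
  ultimately show ?thesis using conj_to_scalar[OF P] intertwine by simp
qed

text \<open>Two characters in \<open>X(\<rho>)\<close> realising the isomorphism agree on every reflection: where
  \<open>\<rho>(s) \<noteq> \<plusminus>1\<close> both are \<open>1\<close> by definition of \<open>X(\<rho>)\<close>; where \<open>\<rho>(s) = \<plusminus>1\<close> they are read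
  off from the scalar by which the twisted dual acts.\<close>
lemma X_set_iso_agree_on_reflections:
  assumes G: "finite_mat_group n W" and R: "is_rep n W d \<rho>" and d: "d > 0"
    and eta: "\<eta> \<in> X_set n W d \<rho>" and eta': "\<eta>' \<in> X_set n W d \<rho>"
    and iso: "rep_iso W d (twist (dual_rep n W \<rho>) sign_char) (twist \<rho> (\<eta> :: complex mat \<Rightarrow> 'k::field))"
    and iso': "rep_iso W d (twist (dual_rep n W \<rho>) sign_char) (twist \<rho> \<eta>')"
    and s: "s \<in> reflections n W"
  shows "\<eta>' s = \<eta> s"
proof -
  have sW: "s \<in> W" using s unfolding reflections_def by auto
  have vals: "\<eta> s = 1 \<or> \<eta> s = -1" "\<eta>' s = 1 \<or> \<eta>' s = -1"
    using eta eta' sW unfolding X_set_def sign_hom_def by auto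
  show ?thesis
  proof (cases "\<rho> s = 1\<^sub>m d \<or> \<rho> s = - (1\<^sub>m d)")
    case False
    then have "\<eta> s = 1" "\<eta>' s = 1" using eta eta' s vals unfolding X_set_def by auto
    then show ?thesis by simp
  next
    case True
    moreover have "- (1\<^sub>m d) = (-1::'k) \<cdot>\<^sub>m 1\<^sub>m d" by (rule eq_matI) auto
    moreover have "1\<^sub>m d = (1::'k) \<cdot>\<^sub>m 1\<^sub>m d" by (simp add: one_smult_mat')
    ultimately obtain \<sigma> where scalar: "\<rho> s = \<sigma> \<cdot>\<^sub>m 1\<^sub>m d" and \<sigma>: "\<sigma> \<noteq> 0"
      by (metis one_neq_zero neg_equal_0_iff_equal)
    have "(\<eta> s * \<sigma>) \<cdot>\<^sub>m 1\<^sub>m d = (\<eta>' s * \<sigma>) \<cdot>\<^sub>m (1\<^sub>m d :: 'k mat)"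
      using twisted_dual_at_scalar[OF G R sW scalar iso] twisted_dual_at_scalar[OF G R sW scalar iso']
      by simp
    from arg_cong[OF this, of "\<lambda>M. M $$ (0, 0)"] d have "\<eta> s * \<sigma> = \<eta>' s * \<sigma>" by simp
    then show ?thesis using \<sigma> by simp
  qed
qed

text \<open>Since reflections generate \<open>W\<close>, such a character is unique.\<close>
lemma X_set_iso_unique:
  assumes W: "finite_reflection_group n W" and R: "is_rep n W d \<rho>" and d: "d > 0"
    and eta: "\<eta> \<in> X_set n W d \<rho>" and eta': "\<eta>' \<in> X_set n W d \<rho>"
    and iso: "rep_iso W d (twist (dual_rep n W \<rho>) sign_char) (twist \<rho> (\<eta> :: complex mat \<Rightarrow> 'k::field))"
    and iso': "rep_iso W d (twist (dual_rep n W \<rho>) sign_char) (twist \<rho> \<eta>')"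
    and w: "w \<in> W"
  shows "\<eta>' w = \<eta> w"
  using W w
proof (induction rule: reflection_induct)
  case one
  have G: "finite_mat_group n W" using W unfolding finite_reflection_group_def by auto
  have "sign_hom W \<eta>" "sign_hom W \<eta>'" using eta eta' unfolding X_set_def by auto
  then show ?case using sign_hom_one[OF G, of \<eta>] sign_hom_one[OF G, of \<eta>'] by simp
next
  case (step s x)
  have G: "finite_mat_group n W" using W unfolding finite_reflection_group_def by auto
  have h: "sign_hom W \<eta>" and h': "sign_hom W \<eta>'" using eta eta' unfolding X_set_def by auto
  have sW: "s \<in> W" using step(1) unfolding reflections_def by auto
  have "\<eta>' (s * x) = \<eta>' s * \<eta>' x" using h' sW step(2) unfolding sign_hom_def by blast
  also have "\<dots> = \<eta> s * \<eta> x"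
    using X_set_iso_agree_on_reflections[OF G R d eta eta' iso iso' step(1)] step(3) by simp
  also have "\<dots> = \<eta> (s * x)" using h sW step(2) unfolding sign_hom_def by simp
  finally show ?case .
qed

section \<open>The image of \<open>\<H>'\<close> lies in \<open>\<o>\<s>\<p>(V\<^sub>\<rho>)\<close>\<close>

lemma reflection_sign_char:
  assumes "s \<in> reflections n W"
  shows "(sign_char s :: 'k::field) = -1"
  using assms reflection_det unfolding reflections_def sign_char_def by auto

lemma rep_reflection_involution:
  assumes G: "finite_mat_group n W" and R: "is_rep n W d \<rho>" and s: "s \<in> reflections n W"
  shows "\<rho> s * \<rho> s = 1\<^sub>m d"
proof -
  have "s \<in> W" and "s * s = 1\<^sub>m n" using s unfolding reflections_def is_reflection_def by auto
  then show ?thesis using rep_mult[OF R] R unfolding is_rep_def by metis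
qed

lemma rep_ext_carrier: "rep_ext W d \<rho> a \<in> carrier_mat d d"
  unfolding rep_ext_def by simp

lemma rep_ext_add: "rep_ext W d \<rho> (\<lambda>g. a g + b g) = rep_ext W d \<rho> a + rep_ext W d \<rho> b"
  unfolding rep_ext_def by (rule eq_matI) (auto simp: sum.distrib algebra_simps)

lemma rep_ext_diff: "rep_ext W d \<rho> (\<lambda>g. a g - b g) = rep_ext W d \<rho> a - rep_ext W d \<rho> b"
  unfolding rep_ext_def by (rule eq_matI) (auto simp: sum_subtractf algebra_simps)

lemma rep_ext_smult: "rep_ext W d \<rho> (\<lambda>g. c * a g) = c \<cdot>\<^sub>m rep_ext W d \<rho> a"
  unfolding rep_ext_def by (rule eq_matI) (auto simp: sum_distrib_left algebra_simps)

lemma rep_ext_basis: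
  assumes "finite W" "s \<in> W" "is_rep n W d \<rho>"
  shows "rep_ext W d \<rho> (ga_basis s) = \<rho> s"
proof -
  have sC: "\<rho> s \<in> carrier_mat d d" using rep_carrier assms by blast
  show ?thesis
  proof (rule eq_matI)
    fix i j assume "i < dim_row (\<rho> s)" "j < dim_col (\<rho> s)"
    then have ij: "i < d" "j < d" using sC by auto
    have "(\<Sum>w\<in>W. ga_basis s w * \<rho> w $$ (i, j)) = (\<Sum>w\<in>W. if w = s then \<rho> w $$ (i, j) else 0)"
      unfolding ga_basis_def by (rule sum.cong) auto
    also have "\<dots> = \<rho> s $$ (i, j)" using assms by simp
    finally show "rep_ext W d \<rho> (ga_basis s) $$ (i, j) = \<rho> s $$ (i, j)"
      unfolding rep_ext_def using ij by simp
  qed (use sC in \<open>auto simp: rep_ext_def\<close>)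
qed

lemma rep_ext_mult:
  assumes G: "finite_mat_group n W" and R: "is_rep n W d \<rho>"
  shows "rep_ext W d \<rho> (ga_mult W a b) = rep_ext W d \<rho> a * rep_ext W d \<rho> (b :: complex mat \<Rightarrow> 'k::field)"
proof (rule eq_matI)
  have fin: "finite W" and closed: "\<And>x y. x \<in> W \<Longrightarrow> y \<in> W \<Longrightarrow> x * y \<in> W"
    using G unfolding finite_mat_group_def by auto
  fix i j assume "i < dim_row (rep_ext W d \<rho> a * rep_ext W d \<rho> b)"
    "j < dim_col (rep_ext W d \<rho> a * rep_ext W d \<rho> b)"
  then have i: "i < d" and j: "j < d" unfolding rep_ext_def by auto
  have "rep_ext W d \<rho> (ga_mult W a b) $$ (i, j) =
      (\<Sum>g\<in>W. \<Sum>x\<in>W. \<Sum>y\<in>W. if x * y = g then a x * b y * \<rho> g $$ (i, j) else 0)"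
    unfolding rep_ext_def ga_mult_def using i j
    by (simp add: sum_distrib_right) (intro sum.cong refl, simp)
  also have "\<dots> = (\<Sum>x\<in>W. \<Sum>y\<in>W. \<Sum>g\<in>W. if x * y = g then a x * b y * \<rho> g $$ (i, j) else 0)"
    by (subst sum.swap) (rule sum.cong[OF refl], rule sum.swap)
  also have "\<dots> = (\<Sum>x\<in>W. \<Sum>y\<in>W. a x * b y * \<rho> (x * y) $$ (i, j))"
    using fin closed by (intro sum.cong refl) (simp add: sum.delta)
  also have "\<dots> = (\<Sum>x\<in>W. \<Sum>y\<in>W. \<Sum>k<d. a x * b y * (\<rho> x $$ (i, k) * \<rho> y $$ (k, j)))"
  proof (intro sum.cong refl)
    fix x y assume x: "x \<in> W" and y: "y \<in> W"
    have "\<rho> (x * y) $$ (i, j) = (\<Sum>k<d. \<rho> x $$ (i, k) * \<rho> y $$ (k, j))"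
      using rep_mult[OF R x y] rep_carrier[OF R x] rep_carrier[OF R y] i j
      by (simp add: scalar_prod_def atLeast0LessThan)
    then show "a x * b y * \<rho> (x * y) $$ (i, j) = (\<Sum>k<d. a x * b y * (\<rho> x $$ (i, k) * \<rho> y $$ (k, j)))"
      by (simp add: sum_distrib_left)
  qed
  also have "\<dots> = (\<Sum>k<d. (\<Sum>x\<in>W. a x * \<rho> x $$ (i, k)) * (\<Sum>y\<in>W. b y * \<rho> y $$ (k, j)))"
    by (simp add: sum_product sum.swap[of _ "{..<d}"] ac_simps)
  also have "\<dots> = (rep_ext W d \<rho> a * rep_ext W d \<rho> b) $$ (i, j)"
    unfolding rep_ext_def using i j by (simp add: scalar_prod_def atLeast0LessThan)
  finally show "rep_ext W d \<rho> (ga_mult W a b) $$ (i, j) = (rep_ext W d \<rho> a * rep_ext W d \<rho> b) $$ (i, j)" .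
qed (auto simp: rep_ext_def)

lemma rep_ext_bracket:
  assumes G: "finite_mat_group n W" and R: "is_rep n W d \<rho>"
  shows "rep_ext W d \<rho> (ga_bracket W a b) =
    rep_ext W d \<rho> a * rep_ext W d \<rho> b - rep_ext W d \<rho> b * rep_ext W d \<rho> (a :: complex mat \<Rightarrow> 'k::field)"
  unfolding ga_bracket_def rep_ext_diff rep_ext_mult[OF G R] ..

text \<open>\<open>u\<close> is skew for \<open>B\<close> up to the scalar \<open>c\<close>: \<open>\<langle>ux,y\<rangle> + \<langle>x,uy\<rangle> = c\<langle>x,y\<rangle>\<close>, i.e. \<open>u\<close> lies in
  the Lie algebra of the similitude group of \<open>B\<close>. Such \<open>u\<close> form a Lie algebra in which
  commutators are genuinely skew (\<open>c = 0\<close>).\<close>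
definition conformal_skew :: "nat \<Rightarrow> 'k::field mat \<Rightarrow> 'k mat \<Rightarrow> 'k \<Rightarrow> bool" where
  "conformal_skew d B u c \<longleftrightarrow> (\<forall>x \<in> carrier_vec d. \<forall>y \<in> carrier_vec d.
     bform B (u *\<^sub>v x) y + bform B x (u *\<^sub>v y) = c * bform B x y)"

lemma conformal_skewD:
  "conformal_skew d B u c \<Longrightarrow> x \<in> carrier_vec d \<Longrightarrow> y \<in> carrier_vec d \<Longrightarrow>
    bform B (u *\<^sub>v x) y + bform B x (u *\<^sub>v y) = c * bform B x y"
  unfolding conformal_skew_def by blast

context
  fixes d :: nat and B U V :: "'k::field mat"
  assumes B: "B \<in> carrier_mat d d" and U: "U \<in> carrier_mat d d" and V: "V \<in> carrier_mat d d"
begin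

lemma conformal_skew_add:
  assumes "conformal_skew d B U c1" "conformal_skew d B V c2"
  shows "conformal_skew d B (U + V) (c1 + c2)"
  unfolding conformal_skew_def
proof (intro ballI)
  fix x y :: "'k vec" assume x: "x \<in> carrier_vec d" and y: "y \<in> carrier_vec d"
  have "(U + V) *\<^sub>v x = U *\<^sub>v x + V *\<^sub>v x" "(U + V) *\<^sub>v y = U *\<^sub>v y + V *\<^sub>v y"
    using U V x y by (simp_all add: add_mult_distrib_mat_vec)
  then show "bform B ((U + V) *\<^sub>v x) y + bform B x ((U + V) *\<^sub>v y) = (c1 + c2) * bform B x y"
    using conformal_skewD[OF assms(1) x y] conformal_skewD[OF assms(2) x y]
      bform_add_left[OF B, of "U *\<^sub>v x" "V *\<^sub>v x" y] bform_add_right[OF B, of "U *\<^sub>v y" "V *\<^sub>v y" x]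
      U V x y by (simp add: algebra_simps)
qed

lemma conformal_skew_smult:
  assumes "conformal_skew d B U c"
  shows "conformal_skew d B (a \<cdot>\<^sub>m U) (a * c)"
  unfolding conformal_skew_def
proof (intro ballI)
  fix x y :: "'k vec" assume x: "x \<in> carrier_vec d" and y: "y \<in> carrier_vec d"
  have "a * bform B (U *\<^sub>v x) y + a * bform B x (U *\<^sub>v y) = (a * c) * bform B x y"
    using conformal_skewD[OF assms x y] by (metis distrib_left mult.assoc)
  then show "bform B ((a \<cdot>\<^sub>m U) *\<^sub>v x) y + bform B x ((a \<cdot>\<^sub>m U) *\<^sub>v y) = (a * c) * bform B x y"
    using U x y bform_smult_left[OF B, of "U *\<^sub>v x" y a] bform_smult_right[OF B, of "U *\<^sub>v y" x a]
    by (simp add: smult_mat_mult_vec)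
qed

lemma conformal_skew_commutator:
  assumes sU: "conformal_skew d B U c1" and sV: "conformal_skew d B V c2"
  shows "conformal_skew d B (U * V - V * U) 0"
  unfolding conformal_skew_def
proof (intro ballI)
  fix x y :: "'k vec" assume x: "x \<in> carrier_vec d" and y: "y \<in> carrier_vec d"
  have Ux: "U *\<^sub>v x \<in> carrier_vec d" and Vx: "V *\<^sub>v x \<in> carrier_vec d"
    and Uy: "U *\<^sub>v y \<in> carrier_vec d" and Vy: "V *\<^sub>v y \<in> carrier_vec d" using U V x y by auto
  have comm: "(U * V - V * U) *\<^sub>v z = U *\<^sub>v (V *\<^sub>v z) - V *\<^sub>v (U *\<^sub>v z)"
    if "z \<in> carrier_vec d" for z
    using U V that by (simp add: minus_mult_distrib_mat_vec[of "U * V" d d "V * U"] assoc_mult_mat_vec[of _ d d _ d])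
  have diff_left: "bform B (p - q) z = bform B p z - bform B q z"
    and diff_right: "bform B z (p - q) = bform B z p - bform B z q"
    if "p \<in> carrier_vec d" "q \<in> carrier_vec d" "z \<in> carrier_vec d" for p q z
    unfolding bform_def using that B
    by (simp_all add: minus_scalar_prod_distrib[of _ d] mult_minus_distrib_mat_vec[of B d d]
        scalar_prod_minus_distrib[of _ d])
  have skew_U_Vx: "bform B (U *\<^sub>v (V *\<^sub>v x)) y + bform B (V *\<^sub>v x) (U *\<^sub>v y) = c1 * bform B (V *\<^sub>v x) y"
    by (rule conformal_skewD[OF sU Vx y])
  have skew_V_Uy: "bform B (V *\<^sub>v x) (U *\<^sub>v y) + bform B x (V *\<^sub>v (U *\<^sub>v y)) = c2 * bform B x (U *\<^sub>v y)"
    by (rule conformal_skewD[OF sV x Uy])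
  have skew_V_Ux: "bform B (V *\<^sub>v (U *\<^sub>v x)) y + bform B (U *\<^sub>v x) (V *\<^sub>v y) = c2 * bform B (U *\<^sub>v x) y"
    by (rule conformal_skewD[OF sV Ux y])
  have skew_U_Vy: "bform B (U *\<^sub>v x) (V *\<^sub>v y) + bform B x (U *\<^sub>v (V *\<^sub>v y)) = c1 * bform B x (V *\<^sub>v y)"
    by (rule conformal_skewD[OF sU x Vy])
  have skew_U: "bform B (U *\<^sub>v x) y + bform B x (U *\<^sub>v y) = c1 * bform B x y"
    by (rule conformal_skewD[OF sU x y])
  have skew_V: "bform B (V *\<^sub>v x) y + bform B x (V *\<^sub>v y) = c2 * bform B x y"
    by (rule conformal_skewD[OF sV x y])
  have "bform B ((U * V - V * U) *\<^sub>v x) y + bform B x ((U * V - V * U) *\<^sub>v y)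
      = bform B (U *\<^sub>v (V *\<^sub>v x)) y - bform B (V *\<^sub>v (U *\<^sub>v x)) y
        + (bform B x (U *\<^sub>v (V *\<^sub>v y)) - bform B x (V *\<^sub>v (U *\<^sub>v y)))"
    unfolding comm[OF x] comm[OF y] using U V x y by (simp add: diff_left diff_right)
  also have "\<dots> = c1 * bform B (V *\<^sub>v x) y + c1 * bform B x (V *\<^sub>v y)
      - (c2 * bform B (U *\<^sub>v x) y + c2 * bform B x (U *\<^sub>v y))"
    unfolding skew_U_Vx[symmetric] skew_V_Uy[symmetric] skew_V_Ux[symmetric] skew_U_Vy[symmetric]
    by (simp add: algebra_simps)
  also have "\<dots> = c1 * (bform B (V *\<^sub>v x) y + bform B x (V *\<^sub>v y))
      - c2 * (bform B (U *\<^sub>v x) y + bform B x (U *\<^sub>v y))"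
    by (simp add: algebra_simps)
  also have "\<dots> = 0 * bform B x y" unfolding skew_U skew_V by simp
  finally show "bform B ((U * V - V * U) *\<^sub>v x) y + bform B x ((U * V - V * U) *\<^sub>v y) = 0 * bform B x y" .
qed

end

lemma conformal_skew_scalar:
  assumes B: "B \<in> carrier_mat d d"
  shows "conformal_skew d B (a \<cdot>\<^sub>m 1\<^sub>m d) (2 * (a::'k::field))"
  unfolding conformal_skew_def
proof (intro ballI)
  fix x y :: "'k vec" assume x: "x \<in> carrier_vec d" and y: "y \<in> carrier_vec d"
  show "bform B ((a \<cdot>\<^sub>m 1\<^sub>m d) *\<^sub>v x) y + bform B x ((a \<cdot>\<^sub>m 1\<^sub>m d) *\<^sub>v y) = 2 * a * bform B x y"
    using smult_mat_mult_vec[of "1\<^sub>m d" d d x a] smult_mat_mult_vec[of "1\<^sub>m d" d d y a]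
      bform_smult_left[OF B x y, of a] bform_smult_right[OF B y x, of a] x y
    by simp
qed

lemma mat_trace_commutator:
  assumes "A \<in> carrier_mat d d" "B \<in> carrier_mat d d"
  shows "mat_trace (A * B - B * (A :: 'k::field mat)) = 0"
proof -
  have "mat_trace (A * B) = (\<Sum>i<d. \<Sum>k<d. A $$ (i, k) * B $$ (k, i))"
    unfolding mat_trace_def using assms by (auto simp: scalar_prod_def atLeast0LessThan)
  also have "\<dots> = (\<Sum>i<d. \<Sum>k<d. B $$ (i, k) * A $$ (k, i))"
    by (subst sum.swap) (simp add: mult.commute)
  also have "\<dots> = mat_trace (B * A)"
    unfolding mat_trace_def using assms by (auto simp: scalar_prod_def atLeast0LessThan)
  finally show ?thesis unfolding mat_trace_def using assms by (simp add: sum_subtractf)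
qed

lemma mat_trace_add:
  "A \<in> carrier_mat d d \<Longrightarrow> B \<in> carrier_mat d d \<Longrightarrow> mat_trace (A + B) = mat_trace A + mat_trace (B :: 'k::field mat)"
  unfolding mat_trace_def by (simp add: sum.distrib)

lemma mat_trace_smult:
  "A \<in> carrier_mat d d \<Longrightarrow> mat_trace (a \<cdot>\<^sub>m A) = a * mat_trace (A :: 'k::field mat)"
  unfolding mat_trace_def by (auto simp: sum_distrib_left intro!: sum.cong)

text \<open>Each reflection acts as an infinitesimal similitude of the \<open>\<epsilon>\<eta>\<close>-invariant form: if
  \<open>\<eta>(s) = -1\<close> then \<open>\<rho>(s) = \<plusminus>1\<close> by definition of \<open>X(\<rho>)\<close>; if \<open>\<eta>(s) = 1\<close> then \<open>\<rho>(s)\<close> is an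
  involution with \<open>\<langle>\<rho>(s)x,\<rho>(s)y\<rangle> = -\<langle>x,y\<rangle>\<close>, hence skew.\<close>
lemma reflection_conformal_skew:
  assumes G: "finite_mat_group n W" and R: "is_rep n W d \<rho>" and eta: "\<eta> \<in> X_set n W d \<rho>"
    and B: "invariant_form W d \<rho> (\<lambda>w. sign_char w * \<eta> w) (B :: 'k::field mat)"
    and s: "s \<in> reflections n W"
  shows "\<exists>c. conformal_skew d B (\<rho> s) c"
proof -
  have BC: "B \<in> carrier_mat d d" using B unfolding invariant_form_def by auto
  have sW: "s \<in> W" using s unfolding reflections_def by auto
  have "\<eta> s = 1 \<or> \<eta> s = -1" using eta sW unfolding X_set_def sign_hom_def by auto
  then show ?thesis
  proof
    assume "\<eta> s = -1"
    then have "\<rho> s = 1 \<cdot>\<^sub>m 1\<^sub>m d \<or> \<rho> s = (-1) \<cdot>\<^sub>m 1\<^sub>m d"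
      using eta s unfolding X_set_def by (auto simp: one_smult_mat' intro!: eq_matI)
    then show ?thesis
      using conformal_skew_scalar[OF BC, of 1] conformal_skew_scalar[OF BC, of "-1"] by auto
  next
    assume eta_s: "\<eta> s = 1"
    let ?S = "\<rho> s"
    have SC: "?S \<in> carrier_mat d d" using rep_carrier[OF R sW] .
    have anti: "bform B (?S *\<^sub>v x) (?S *\<^sub>v y) = - bform B x y"
      if "x \<in> carrier_vec d" "y \<in> carrier_vec d" for x y
    proof -
      have "(sign_char s :: 'k) = -1" by (rule reflection_sign_char[OF s])
      then show ?thesis using B sW eta_s that unfolding invariant_form_def by auto
    qed
    have "conformal_skew d B ?S 0" unfolding conformal_skew_def
    proof (intro ballI)
      fix x y :: "'k vec" assume x: "x \<in> carrier_vec d" and y: "y \<in> carrier_vec d"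
      have "?S *\<^sub>v (?S *\<^sub>v y) = y"
        using rep_reflection_involution[OF G R s] SC y by (simp add: assoc_mult_mat_vec[symmetric])
      then have "bform B (?S *\<^sub>v x) y = - bform B x (?S *\<^sub>v y)"
        using anti[OF x, of "?S *\<^sub>v y"] SC y by simp
      then show "bform B (?S *\<^sub>v x) y + bform B x (?S *\<^sub>v y) = 0 * bform B x y" by simp
    qed
    then show ?thesis by blast
  qed
qed

lemma lie_H_conformal_skew:
  assumes G: "finite_mat_group n W" and R: "is_rep n W d \<rho>" and eta: "\<eta> \<in> X_set n W d \<rho>"
    and B: "invariant_form W d \<rho> (\<lambda>w. sign_char w * \<eta> w) (B :: 'k::field mat)"
    and a: "a \<in> lie_H n W"
  shows "\<exists>c. conformal_skew d B (rep_ext W d \<rho> a) c"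
  using a
proof (induction rule: lie_H.induct)
  case (gen s)
  have "finite W" "s \<in> W" using G gen unfolding finite_mat_group_def reflections_def by auto
  then have "rep_ext W d \<rho> (ga_basis s) = \<rho> s" using R by (rule rep_ext_basis)
  then show ?case using reflection_conformal_skew[OF G R eta B gen] by simp
next
  case (add a b)
  have BC: "B \<in> carrier_mat d d" using B unfolding invariant_form_def by auto
  from add show ?case
    unfolding rep_ext_add using conformal_skew_add[OF BC rep_ext_carrier rep_ext_carrier] by blast
next
  case (smult a c)
  have BC: "B \<in> carrier_mat d d" using B unfolding invariant_form_def by auto
  from smult show ?case
    unfolding rep_ext_smult using conformal_skew_smult[OF BC rep_ext_carrier] by blast
next
  case (bracket a b)
  have BC: "B \<in> carrier_mat d d" using B unfolding invariant_form_def by auto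
  from bracket show ?case
    unfolding rep_ext_bracket[OF G R] using conformal_skew_commutator[OF BC rep_ext_carrier rep_ext_carrier] by blast
qed

lemma lie_H'_osp:
  assumes G: "finite_mat_group n W" and R: "is_rep n W d \<rho>" and eta: "\<eta> \<in> X_set n W d \<rho>"
    and B: "invariant_form W d \<rho> (\<lambda>w. sign_char w * \<eta> w) (B :: 'k::field mat)"
    and a: "a \<in> lie_H' n W"
  shows "in_osp d B (rep_ext W d \<rho> a)"
proof -
  have BC: "B \<in> carrier_mat d d" using B unfolding invariant_form_def by auto
  have "conformal_skew d B (rep_ext W d \<rho> a) 0 \<and> mat_trace (rep_ext W d \<rho> a) = 0"
    using a
  proof (induction rule: lie_H'.induct)
    case zero
    have "rep_ext W d \<rho> (\<lambda>g. 0) = 0 \<cdot>\<^sub>m 1\<^sub>m d" unfolding rep_ext_def by (rule eq_matI) auto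
    moreover have "mat_trace (0 \<cdot>\<^sub>m 1\<^sub>m d :: 'k mat) = 0" unfolding mat_trace_def by simp
    ultimately show ?case using conformal_skew_scalar[OF BC, of 0] by simp
  next
    case (bracket a b)
    from lie_H_conformal_skew[OF G R eta B bracket(1)] lie_H_conformal_skew[OF G R eta B bracket(2)]
    show ?case unfolding rep_ext_bracket[OF G R]
      using conformal_skew_commutator[OF BC rep_ext_carrier rep_ext_carrier]
        mat_trace_commutator[OF rep_ext_carrier rep_ext_carrier] by blast
  next
    case (add a b)
    have "conformal_skew d B (rep_ext W d \<rho> a + rep_ext W d \<rho> b) (0 + 0)"
      using add.IH by (intro conformal_skew_add[OF BC rep_ext_carrier rep_ext_carrier]) auto
    then show ?case unfolding rep_ext_add
      using add.IH mat_trace_add[OF rep_ext_carrier[of W d \<rho> a] rep_ext_carrier[of W d \<rho> b]] by simp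
  next
    case (smult a c)
    have "conformal_skew d B (c \<cdot>\<^sub>m rep_ext W d \<rho> a) (c * 0)"
      using smult.IH by (intro conformal_skew_smult[OF BC rep_ext_carrier]) auto
    then show ?case unfolding rep_ext_smult
      using smult.IH mat_trace_smult[OF rep_ext_carrier[of W d \<rho> a]] by simp
  qed
  then show ?thesis unfolding in_osp_def conformal_skew_def using rep_ext_carrier by auto
qed

section \<open>Symmetric forms with an anti-isometric involution are hyperbolic\<close>

text \<open>A matrix with a right inverse of shape \<open>q \<times> p\<close> forces \<open>p \<le> q\<close>; this replaces a
  dimension argument when bounding the size of a dual system of vectors.\<close>
lemma right_inverse_dim_le:
  assumes A: "A \<in> carrier_mat p q" and M: "M \<in> carrier_mat q p" and AM: "A * M = (1\<^sub>m p :: 'k::field mat)"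
  shows "p \<le> q"
proof (rule ccontr)
  assume "\<not> p \<le> q"
  then have qp: "q < p" by simp
  define A' where "A' = mat p p (\<lambda>(i, j). if j < q then A $$ (i, j) else 0)"
  define M' where "M' = mat p p (\<lambda>(i, j). if i < q then M $$ (i, j) else 0)"
  have A'C: "A' \<in> carrier_mat p p" and M'C: "M' \<in> carrier_mat p p" unfolding A'_def M'_def by auto
  have "A' * M' = A * M"
  proof (rule eq_matI)
    fix i j assume "i < dim_row (A * M)" "j < dim_col (A * M)"
    then have i: "i < p" and j: "j < p" using A M by auto
    have "(A' * M') $$ (i, j) =
        (\<Sum>l\<in>{0..<p}. (if l < q then A $$ (i, l) else 0) * (if l < q then M $$ (l, j) else 0))"
      unfolding A'_def M'_def using i j by (simp add: scalar_prod_def)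
    also have "\<dots> = (\<Sum>l\<in>{0..<q}. (if l < q then A $$ (i, l) else 0) * (if l < q then M $$ (l, j) else 0))"
      by (rule sum.mono_neutral_right) (use qp in auto)
    also have "\<dots> = (A * M) $$ (i, j)" using A M i j by (simp add: scalar_prod_def)
    finally show "(A' * M') $$ (i, j) = (A * M) $$ (i, j)" .
  qed (use A M A'C M'C in auto)
  then have "det A' * det M' = 1" using AM det_mult[OF A'C M'C] by simp
  moreover have "det A' = 0"
  proof -
    have "A' *\<^sub>v unit_vec p (p - 1) = 0\<^sub>v p"
      unfolding A'_def using qp by (intro eq_vecI) (auto simp: scalar_prod_def intro!: sum.neutral)
    moreover have "unit_vec p (p - 1) \<noteq> (0\<^sub>v p :: 'k vec)" using qp by simp
    ultimately show ?thesis using det_0_iff_vec_prod_zero_field[OF A'C] by (metis unit_vec_carrier)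
  qed
  ultimately show False by simp
qed

definition residual :: "nat \<Rightarrow> nat \<Rightarrow> 'k::field vec \<Rightarrow> (nat \<Rightarrow> 'k) \<Rightarrow> (nat \<Rightarrow> 'k) \<Rightarrow>
    (nat \<Rightarrow> 'k vec) \<Rightarrow> (nat \<Rightarrow> 'k vec) \<Rightarrow> 'k vec" where
  "residual d k x \<alpha> \<beta> e f = vec d (\<lambda>r. x $ r - (\<Sum>i<k. \<alpha> i * e i $ r + \<beta> i * f i $ r))"

lemma residual_scalar_prod:
  assumes x: "x \<in> carrier_vec d" and w: "w \<in> carrier_vec d"
    and e: "\<And>i. i < k \<Longrightarrow> e i \<in> carrier_vec d" and f: "\<And>i. i < k \<Longrightarrow> f i \<in> carrier_vec d"
  shows "residual d k x \<alpha> \<beta> e f \<bullet> w = x \<bullet> w - (\<Sum>i<k. \<alpha> i * (e i \<bullet> w) + \<beta> i * (f i \<bullet> (w :: 'k::field vec)))"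
proof -
  have "residual d k x \<alpha> \<beta> e f \<bullet> w =
      (\<Sum>r\<in>{0..<d}. x $ r * w $ r) - (\<Sum>r\<in>{0..<d}. \<Sum>i<k. \<alpha> i * (e i $ r * w $ r) + \<beta> i * (f i $ r * w $ r))"
  proof -
    have "\<And>r. (\<Sum>i<k. \<alpha> i * e i $ r + \<beta> i * f i $ r) * w $ r
        = (\<Sum>i<k. \<alpha> i * (e i $ r * w $ r) + \<beta> i * (f i $ r * w $ r))"
      by (subst sum_distrib_right) (rule sum.cong, auto simp: algebra_simps)
    then show ?thesis
      unfolding residual_def scalar_prod_def using w by (simp add: left_diff_distrib sum_subtractf)
  qed
  also have "(\<Sum>r\<in>{0..<d}. \<Sum>i<k. \<alpha> i * (e i $ r * w $ r) + \<beta> i * (f i $ r * w $ r))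
     = (\<Sum>i<k. \<alpha> i * (e i \<bullet> w) + \<beta> i * (f i \<bullet> w))"
    unfolding scalar_prod_def using w e f
    by (subst sum.swap) (auto simp: sum.distrib sum_distrib_left intro!: sum.cong)
  finally show ?thesis unfolding scalar_prod_def using x w by simp
qed

lemma bform_residual:
  assumes B: "B \<in> carrier_mat d d" and x: "x \<in> carrier_vec d" and w: "w \<in> carrier_vec d"
    and e: "\<And>i. i < k \<Longrightarrow> e i \<in> carrier_vec d" and f: "\<And>i. i < k \<Longrightarrow> f i \<in> carrier_vec d"
  shows "bform B (residual d k x \<alpha> \<beta> e f) w =
    bform B x w - (\<Sum>i<k. \<alpha> i * bform B (e i) w + \<beta> i * bform B (f i) (w :: 'k::field vec))"
  unfolding bform_def using residual_scalar_prod[OF x _ e f, of "B *\<^sub>v w"] B w by simp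

lemma mult_mat_vec_residual:
  assumes A: "(A :: 'k::field mat) \<in> carrier_mat d d" and x: "x \<in> carrier_vec d"
    and e: "\<And>i. i < k \<Longrightarrow> e i \<in> carrier_vec d" and f: "\<And>i. i < k \<Longrightarrow> f i \<in> carrier_vec d"
  shows "A *\<^sub>v residual d k x \<alpha> \<beta> e f = residual d k (A *\<^sub>v x) \<alpha> \<beta> (\<lambda>i. A *\<^sub>v e i) (\<lambda>i. A *\<^sub>v f i)"
proof (rule eq_vecI)
  fix r assume "r < dim_vec (residual d k (A *\<^sub>v x) \<alpha> \<beta> (\<lambda>i. A *\<^sub>v e i) (\<lambda>i. A *\<^sub>v f i))"
  then have r: "r < d" unfolding residual_def by simp
  have row: "row A r \<in> carrier_vec d" using A r by simp
  have "(A *\<^sub>v residual d k x \<alpha> \<beta> e f) $ r = residual d k x \<alpha> \<beta> e f \<bullet> row A r"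
    using A r by (simp add: comm_scalar_prod[of "row A r" d] residual_def)
  also have "\<dots> = x \<bullet> row A r - (\<Sum>i<k. \<alpha> i * (e i \<bullet> row A r) + \<beta> i * (f i \<bullet> row A r))"
    by (rule residual_scalar_prod[OF x row e f])
  also have "\<dots> = residual d k (A *\<^sub>v x) \<alpha> \<beta> (\<lambda>i. A *\<^sub>v e i) (\<lambda>i. A *\<^sub>v f i) $ r"
    unfolding residual_def using A r x e f by (auto simp: comm_scalar_prod[of _ d] intro!: sum.cong)
  finally show "(A *\<^sub>v residual d k x \<alpha> \<beta> e f) $ r = residual d k (A *\<^sub>v x) \<alpha> \<beta> (\<lambda>i. A *\<^sub>v e i) (\<lambda>i. A *\<^sub>v f i) $ r" .
qed (use A in \<open>simp add: residual_def\<close>)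

lemma residual_eq_zero_iff:
  "residual d k x \<alpha> \<beta> e f = 0\<^sub>v d \<longleftrightarrow> (\<forall>r<d. x $ r = (\<Sum>i<k. \<alpha> i * e i $ r + \<beta> i * f i $ r))"
proof
  assume zero: "residual d k x \<alpha> \<beta> e f = 0\<^sub>v d"
  show "\<forall>r<d. x $ r = (\<Sum>i<k. \<alpha> i * e i $ r + \<beta> i * f i $ r)"
  proof (intro allI impI)
    fix r assume "r < d"
    with arg_cong[OF zero, of "\<lambda>v. v $ r"] show "x $ r = (\<Sum>i<k. \<alpha> i * e i $ r + \<beta> i * f i $ r)"
      unfolding residual_def by simp
  qed
qed (auto simp: residual_def intro!: eq_vecI)

text \<open>The setting: \<open>B\<close> symmetric and nondegenerate, and \<open>S\<close> an involution with
  \<open>\<langle>Sx,Sy\<rangle> = -\<langle>x,y\<rangle>\<close> (this is what a reflection with \<open>\<eta>(s) = 1\<close> provides).\<close>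
locale anti_isometric_involution =
  fixes d :: nat and B S :: "'k::field_char_0 mat"
  assumes B_carrier: "B \<in> carrier_mat d d"
    and S_carrier: "S \<in> carrier_mat d d"
    and S_involution: "S * S = 1\<^sub>m d"
    and anti_isometry: "\<And>x y. x \<in> carrier_vec d \<Longrightarrow> y \<in> carrier_vec d \<Longrightarrow>
      bform B (S *\<^sub>v x) (S *\<^sub>v y) = - bform B x y"
    and B_symmetric: "symmetric_form d B"
    and B_nondegenerate: "nondegenerate d B"

text \<open>\<open>e\<^sub>0,\<dots>,e\<^sub>k\<^sub>-\<^sub>1\<close> in the \<open>+1\<close>-eigenspace and \<open>f\<^sub>0,\<dots>,f\<^sub>k\<^sub>-\<^sub>1\<close> in the \<open>-1\<close>-eigenspace of \<open>S\<close>
  with \<open>\<langle>e\<^sub>i,f\<^sub>j\<rangle> = \<delta>\<^sub>i\<^sub>j\<close>: the beginning of a hyperbolic basis.\<close>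
definition dual_system :: "nat \<Rightarrow> 'k::field mat \<Rightarrow> 'k mat \<Rightarrow> nat \<Rightarrow> (nat \<Rightarrow> 'k vec) \<Rightarrow> (nat \<Rightarrow> 'k vec) \<Rightarrow> bool" where
  "dual_system d B S k e f \<longleftrightarrow>
     (\<forall>i<k. e i \<in> carrier_vec d \<and> f i \<in> carrier_vec d \<and> S *\<^sub>v e i = e i \<and> S *\<^sub>v f i = - f i) \<and>
     (\<forall>i<k. \<forall>j<k. bform B (e i) (f j) = (if i = j then 1 else 0))"

definition spans :: "nat \<Rightarrow> nat \<Rightarrow> (nat \<Rightarrow> 'k::field vec) \<Rightarrow> (nat \<Rightarrow> 'k vec) \<Rightarrow> bool" where
  "spans d k e f \<longleftrightarrow> (\<forall>v \<in> carrier_vec d. \<exists>a b. \<forall>r<d. v $ r = (\<Sum>i<k. a i * e i $ r + b i * f i $ r))"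

definition orthogonal_to_system :: "nat \<Rightarrow> 'k::field mat \<Rightarrow> nat \<Rightarrow> (nat \<Rightarrow> 'k vec) \<Rightarrow> (nat \<Rightarrow> 'k vec) \<Rightarrow> 'k vec \<Rightarrow> bool" where
  "orthogonal_to_system d B k e f x \<longleftrightarrow> (\<forall>j<k. bform B x (e j) = 0 \<and> bform B x (f j) = 0)"

definition system_mat :: "nat \<Rightarrow> nat \<Rightarrow> (nat \<Rightarrow> 'k::field vec) \<Rightarrow> (nat \<Rightarrow> 'k vec) \<Rightarrow> 'k mat" where
  "system_mat d k e f = mat d (2 * k) (\<lambda>(r, j). (if j < k then e j else f (j - k)) $ r)"

definition pairing_mat :: "'k::field mat \<Rightarrow> nat \<Rightarrow> nat \<Rightarrow> (nat \<Rightarrow> 'k vec) \<Rightarrow> (nat \<Rightarrow> 'k vec) \<Rightarrow> 'k mat" where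
  "pairing_mat B d k e f = mat (2 * k) d (\<lambda>(i, r). (B *\<^sub>v (if i < k then f i else e (i - k))) $ r)"

lemma dual_systemD:
  assumes "dual_system d B S k e f" "i < k"
  shows "e i \<in> carrier_vec d" "f i \<in> carrier_vec d" "S *\<^sub>v e i = e i" "S *\<^sub>v f i = - f i"
    "j < k \<Longrightarrow> bform B (e i) (f j) = (if i = j then 1 else 0)"
  using assms unfolding dual_system_def by auto

context anti_isometric_involution
begin

lemma B_sym: "x \<in> carrier_vec d \<Longrightarrow> y \<in> carrier_vec d \<Longrightarrow> bform B x y = bform B y x"
  using B_symmetric unfolding symmetric_form_def by blast

lemma S_S_vec: "v \<in> carrier_vec d \<Longrightarrow> S *\<^sub>v (S *\<^sub>v v) = v"
  using S_involution S_carrier by (simp add: assoc_mult_mat_vec[symmetric])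

lemma neg_S_vec: "v \<in> carrier_vec d \<Longrightarrow> (- S) *\<^sub>v v = - (S *\<^sub>v v)"
  using S_carrier by (intro eq_vecI) (auto simp: scalar_prod_def sum_negf)

text \<open>Both eigenspaces of \<open>S\<close> are totally isotropic, since \<open>\<langle>x,y\<rangle> = -\<langle>x,y\<rangle>\<close> there and the
  characteristic is \<open>0\<close>.\<close>
lemma isotropic_fixed:
  "x \<in> carrier_vec d \<Longrightarrow> y \<in> carrier_vec d \<Longrightarrow> S *\<^sub>v x = x \<Longrightarrow> S *\<^sub>v y = y \<Longrightarrow> bform B x y = 0"
  using anti_isometry[of x y] by simp

lemma isotropic_negated:
  "x \<in> carrier_vec d \<Longrightarrow> y \<in> carrier_vec d \<Longrightarrow> S *\<^sub>v x = - x \<Longrightarrow> S *\<^sub>v y = - y \<Longrightarrow> bform B x y = 0"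
  using anti_isometry[of x y] bform_neg_left[OF B_carrier, of x "- y"] bform_neg_right[OF B_carrier, of y x]
  by simp

text \<open>Replacing \<open>S\<close> by \<open>-S\<close> exchanges the two eigenspaces.\<close>
lemma neg: "anti_isometric_involution d B (- S)"
proof
  show "- S \<in> carrier_mat d d" using S_carrier by simp
  show "- S * - S = 1\<^sub>m d" using S_involution S_carrier by simp
  fix x y :: "'k vec" assume x: "x \<in> carrier_vec d" and y: "y \<in> carrier_vec d"
  show "bform B (- S *\<^sub>v x) (- S *\<^sub>v y) = - bform B x y"
    unfolding neg_S_vec[OF x] neg_S_vec[OF y]
    using bform_neg_left[OF B_carrier, of "S *\<^sub>v x" "- (S *\<^sub>v y)"]
      bform_neg_right[OF B_carrier, of "S *\<^sub>v y" "S *\<^sub>v x"] anti_isometry[OF x y] S_carrier x y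
    by simp
qed (use B_carrier B_symmetric B_nondegenerate in auto)

lemma dual_system_swap: "dual_system d B S k e f \<Longrightarrow> dual_system d B (- S) k f e"
  unfolding dual_system_def using neg_S_vec B_sym by auto

lemma eigen_split:
  assumes x: "x \<in> carrier_vec d"
  shows "x = (1/2) \<cdot>\<^sub>v (x + S *\<^sub>v x) + (1/2) \<cdot>\<^sub>v (x - S *\<^sub>v x)"
    and "S *\<^sub>v ((1/2) \<cdot>\<^sub>v (x + S *\<^sub>v x)) = (1/2) \<cdot>\<^sub>v (x + S *\<^sub>v x)"
    and "S *\<^sub>v ((1/2) \<cdot>\<^sub>v (x - S *\<^sub>v x)) = - ((1/2) \<cdot>\<^sub>v (x - S *\<^sub>v x))"
proof -
  have Sx: "S *\<^sub>v x \<in> carrier_vec d" using S_carrier x by simp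
  show "x = (1/2) \<cdot>\<^sub>v (x + S *\<^sub>v x) + (1/2) \<cdot>\<^sub>v (x - S *\<^sub>v x)"
    using x Sx S_carrier by (intro eq_vecI) (auto simp: field_simps)
  show "S *\<^sub>v ((1/2) \<cdot>\<^sub>v (x + S *\<^sub>v x)) = (1/2) \<cdot>\<^sub>v (x + S *\<^sub>v x)"
    using S_carrier x Sx S_S_vec[OF x]
    by (simp add: mult_mat_vec[of S d d] mult_add_distrib_mat_vec[of S d d]) (intro eq_vecI, auto)
  show "S *\<^sub>v ((1/2) \<cdot>\<^sub>v (x - S *\<^sub>v x)) = - ((1/2) \<cdot>\<^sub>v (x - S *\<^sub>v x))"
    using S_carrier x Sx S_S_vec[OF x]
    by (simp add: mult_mat_vec[of S d d] mult_minus_distrib_mat_vec[of S d d]) (intro eq_vecI, auto simp: field_simps)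
qed

text \<open>Orthogonality to a dual system is preserved by \<open>S\<close>, which fixes the \<open>e\<^sub>i\<close> and negates
  the \<open>f\<^sub>i\<close>.\<close>
lemma orthogonal_to_system_S:
  assumes sys: "dual_system d B S k e f" and x: "x \<in> carrier_vec d"
    and orth: "orthogonal_to_system d B k e f x"
  shows "orthogonal_to_system d B k e f (S *\<^sub>v x)"
  unfolding orthogonal_to_system_def
proof (intro allI impI conjI)
  note sysD = dual_systemD[OF sys]
  fix j assume j: "j < k"
  show "bform B (S *\<^sub>v x) (e j) = 0"
    using anti_isometry[OF x sysD(1)[OF j]] sysD(3)[OF j] orth j unfolding orthogonal_to_system_def by simp
  show "bform B (S *\<^sub>v x) (f j) = 0"
    using anti_isometry[OF x sysD(2)[OF j]] sysD(4)[OF j] orth j S_carrier x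
      bform_neg_right[OF B_carrier sysD(2)[OF j], of "S *\<^sub>v x"] unfolding orthogonal_to_system_def by simp
qed

lemma orthogonal_to_system_eigen_components:
  assumes sys: "dual_system d B S k e f" and x: "x \<in> carrier_vec d"
    and orth: "orthogonal_to_system d B k e f x"
  shows "orthogonal_to_system d B k e f ((1/2) \<cdot>\<^sub>v (x + S *\<^sub>v x))"
    and "orthogonal_to_system d B k e f ((1/2) \<cdot>\<^sub>v (x - S *\<^sub>v x))"
proof -
  note sysD = dual_systemD[OF sys]
  have Sx: "S *\<^sub>v x \<in> carrier_vec d" using S_carrier x by simp
  note orth_Sx = orthogonal_to_system_S[OF sys x orth]
  have "x - S *\<^sub>v x = x + - (S *\<^sub>v x)" using x Sx by (intro eq_vecI) auto
  moreover have "bform B (c \<cdot>\<^sub>v (x + \<sigma> \<cdot>\<^sub>v (S *\<^sub>v x))) v = c * (bform B x v + \<sigma> * bform B (S *\<^sub>v x) v)"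
    if "v \<in> carrier_vec d" for c \<sigma> v
    using bform_smult_left[OF B_carrier _ that] bform_add_left[OF B_carrier x _ that]
      bform_smult_left[OF B_carrier Sx that] x Sx by simp
  moreover have "- (S *\<^sub>v x) = (-1) \<cdot>\<^sub>v (S *\<^sub>v x)" "S *\<^sub>v x = 1 \<cdot>\<^sub>v (S *\<^sub>v x)" by auto
  ultimately show "orthogonal_to_system d B k e f ((1/2) \<cdot>\<^sub>v (x + S *\<^sub>v x))"
    and "orthogonal_to_system d B k e f ((1/2) \<cdot>\<^sub>v (x - S *\<^sub>v x))"
    using orth orth_Sx sysD(1,2) unfolding orthogonal_to_system_def by (metis mult_zero_right add_0)+
qed

text \<open>If a dual system does not span, some nonzero vector is orthogonal to it: subtract from a
  vector outside the span its components along the system.\<close>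
lemma exists_orthogonal_to_system:
  assumes sys: "dual_system d B S k e f" and not_spans: "\<not> spans d k e f"
  obtains x where "x \<in> carrier_vec d" "x \<noteq> 0\<^sub>v d" "orthogonal_to_system d B k e f x"
proof -
  note sysD = dual_systemD[OF sys]
  from not_spans obtain y where y: "y \<in> carrier_vec d"
    and outside: "\<And>a b. \<exists>r<d. y $ r \<noteq> (\<Sum>i<k. a i * e i $ r + b i * f i $ r)"
    unfolding spans_def by blast
  define \<alpha> where "\<alpha> = (\<lambda>i. bform B y (f i))"
  define \<beta> where "\<beta> = (\<lambda>i. bform B y (e i))"
  define x where "x = residual d k y \<alpha> \<beta> e f"
  have "x \<in> carrier_vec d" unfolding x_def residual_def by simp
  moreover have "x \<noteq> 0\<^sub>v d"
    unfolding x_def residual_eq_zero_iff using outside[of \<alpha> \<beta>] by blast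
  moreover have "orthogonal_to_system d B k e f x"
    unfolding orthogonal_to_system_def
  proof (intro allI impI conjI)
    have bx: "bform B x w = bform B y w - (\<Sum>i<k. \<alpha> i * bform B (e i) w + \<beta> i * bform B (f i) w)"
      if "w \<in> carrier_vec d" for w
      unfolding x_def by (rule bform_residual[OF B_carrier y that sysD(1,2)])
    fix j assume j: "j < k"
    have "(\<Sum>i<k. \<alpha> i * bform B (e i) (f j) + \<beta> i * bform B (f i) (f j)) = (\<Sum>i<k. if i = j then \<alpha> i else 0)"
      using sysD isotropic_negated j by (intro sum.cong) auto
    then show "bform B x (f j) = 0" using bx[OF sysD(2)[OF j]] j unfolding \<alpha>_def by simp
    have "(\<Sum>i<k. \<alpha> i * bform B (e i) (e j) + \<beta> i * bform B (f i) (e j)) = (\<Sum>i<k. if i = j then \<beta> i else 0)"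
      using sysD isotropic_fixed B_sym j by (intro sum.cong) auto
    then show "bform B x (e j) = 0" using bx[OF sysD(1)[OF j]] j unfolding \<beta>_def by simp
  qed
  ultimately show ?thesis by (rule that)
qed

text \<open>A nonzero \<open>S\<close>-fixed vector \<open>p\<close> orthogonal to a dual system has a partner \<open>z\<close> in the
  \<open>-1\<close>-eigenspace with \<open>\<langle>p,z\<rangle> = 1\<close> and \<open>z \<bottom> e\<^sub>i\<close>: nondegeneracy gives \<open>y\<close> with \<open>\<langle>p,y\<rangle> \<noteq> 0\<close>,
  only the \<open>-1\<close>-component of \<open>y\<close> contributes, and multiples of the \<open>f\<^sub>i\<close> are subtracted.\<close>
lemma exists_negated_partner:
  assumes sys: "dual_system d B S k e f"
    and p: "p \<in> carrier_vec d" "p \<noteq> 0\<^sub>v d" "S *\<^sub>v p = p"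
    and orth: "orthogonal_to_system d B k e f p"
  obtains z where "z \<in> carrier_vec d" "S *\<^sub>v z = - z" "\<And>j. j < k \<Longrightarrow> bform B (e j) z = 0"
    "bform B p z = 1"
proof -
  note sysD = dual_systemD[OF sys]
  from B_nondegenerate p obtain y where y: "y \<in> carrier_vec d" "bform B p y \<noteq> 0"
    unfolding nondegenerate_def by auto
  define ny where "ny = (1/2) \<cdot>\<^sub>v (y - S *\<^sub>v y)"
  define py where "py = (1/2) \<cdot>\<^sub>v (y + S *\<^sub>v y)"
  have nyC: "ny \<in> carrier_vec d" and pyC: "py \<in> carrier_vec d"
    unfolding ny_def py_def using y S_carrier by auto
  have Sny: "S *\<^sub>v ny = - ny" and Spy: "S *\<^sub>v py = py" unfolding ny_def py_def using eigen_split[OF y(1)] by auto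
  have "bform B p y = bform B p py + bform B p ny"
    using eigen_split(1)[OF y(1)] bform_add_right[OF B_carrier pyC nyC p(1)] unfolding ny_def py_def by simp
  moreover have "bform B p py = 0" by (rule isotropic_fixed[OF p(1) pyC p(3) Spy])
  ultimately have p_ny: "bform B p ny \<noteq> 0" using y by simp
  define \<beta> where "\<beta> = (\<lambda>i. bform B ny (e i))"
  define z where "z = residual d k ny (\<lambda>_. 0) \<beta> e f"
  have zC: "z \<in> carrier_vec d" unfolding z_def residual_def by simp
  have bz: "bform B z w = bform B ny w - (\<Sum>i<k. \<beta> i * bform B (f i) w)" if "w \<in> carrier_vec d" for w
    unfolding z_def using bform_residual[OF B_carrier nyC that sysD(1,2)] by simp
  have Sz: "S *\<^sub>v z = - z"
  proof -
    have "S *\<^sub>v z = residual d k (- ny) (\<lambda>_. 0) \<beta> (\<lambda>i. S *\<^sub>v e i) (\<lambda>i. S *\<^sub>v f i)"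
      unfolding z_def Sny[symmetric] by (rule mult_mat_vec_residual[OF S_carrier nyC sysD(1,2)])
    also have "\<dots> = - z"
      unfolding z_def residual_def using nyC sysD(2,4)
      by (intro eq_vecI) (auto simp: sum_negf[symmetric] carrier_vecD[OF sysD(2)] intro!: sum.cong)
    finally show ?thesis .
  qed
  have e_z: "bform B (e j) z = 0" if j: "j < k" for j
  proof -
    have "(\<Sum>i<k. \<beta> i * bform B (f i) (e j)) = (\<Sum>i<k. if i = j then \<beta> i else 0)"
      using sysD B_sym j by (intro sum.cong) auto
    then show ?thesis using bz[OF sysD(1)[OF j]] j B_sym[OF sysD(1)[OF j] zC] unfolding \<beta>_def by simp
  qed
  have "(\<Sum>i<k. \<beta> i * bform B (f i) p) = 0"
    using orth B_sym sysD(2) p(1) unfolding orthogonal_to_system_def by (intro sum.neutral) auto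
  then have p_z: "bform B p z = bform B p ny" using B_sym[OF p(1) zC] bz[OF p(1)] B_sym[OF p(1) nyC] by simp
  show ?thesis
  proof (rule that[of "(1 / bform B p z) \<cdot>\<^sub>v z"])
    show "(1 / bform B p z) \<cdot>\<^sub>v z \<in> carrier_vec d" using zC by simp
    show "S *\<^sub>v ((1 / bform B p z) \<cdot>\<^sub>v z) = - ((1 / bform B p z) \<cdot>\<^sub>v z)"
      using Sz zC by (auto simp: mult_mat_vec[OF S_carrier zC] intro!: eq_vecI)
    show "bform B (e j) ((1 / bform B p z) \<cdot>\<^sub>v z) = 0" if "j < k" for j
      using bform_smult_right[OF B_carrier zC sysD(1)[OF that]] e_z[OF that] by simp
    show "bform B p ((1 / bform B p z) \<cdot>\<^sub>v z) = 1"
      using bform_smult_right[OF B_carrier zC p(1)] p_z p_ny by simp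
  qed
qed

lemma dual_system_extend_fixed:
  assumes sys: "dual_system d B S k e f"
    and p: "p \<in> carrier_vec d" "p \<noteq> 0\<^sub>v d" "S *\<^sub>v p = p"
    and orth: "orthogonal_to_system d B k e f p"
  shows "\<exists>e' f'. dual_system d B S (Suc k) e' f'"
proof -
  note sysD = dual_systemD[OF sys]
  obtain z where z: "z \<in> carrier_vec d" "S *\<^sub>v z = - z" "\<And>j. j < k \<Longrightarrow> bform B (e j) z = 0"
    "bform B p z = 1"
    using exists_negated_partner[OF sys p orth] by blast
  have "dual_system d B S (Suc k) (e(k := p)) (f(k := z))"
    unfolding dual_system_def
  proof (intro conjI allI impI)
    fix i assume i: "i < Suc k"
    show "(e(k := p)) i \<in> carrier_vec d" "(f(k := z)) i \<in> carrier_vec d"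
      "S *\<^sub>v (e(k := p)) i = (e(k := p)) i" "S *\<^sub>v (f(k := z)) i = - (f(k := z)) i"
      using i sysD p z by (auto simp: less_Suc_eq)
    fix j assume j: "j < Suc k"
    show "bform B ((e(k := p)) i) ((f(k := z)) j) = (if i = j then 1 else 0)"
      using i j sysD z orth unfolding orthogonal_to_system_def by (cases "i < k"; cases "j < k") auto
  qed
  then show ?thesis by blast
qed

text \<open>A dual system that does not span extends: a nonzero vector orthogonal to it has a
  nonzero eigen-component, which extends the system (for the \<open>-1\<close>-component, apply the
  previous lemma to \<open>-S\<close> and the swapped system).\<close>
lemma dual_system_extend:
  assumes sys: "dual_system d B S k e f" and not_spans: "\<not> spans d k e f"
  shows "\<exists>e' f'. dual_system d B S (Suc k) e' f'"
proof -
  obtain x where x: "x \<in> carrier_vec d" "x \<noteq> 0\<^sub>v d" and orth: "orthogonal_to_system d B k e f x"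
    using exists_orthogonal_to_system[OF sys not_spans] by blast
  define p where "p = (1/2) \<cdot>\<^sub>v (x + S *\<^sub>v x)"
  define q where "q = (1/2) \<cdot>\<^sub>v (x - S *\<^sub>v x)"
  have pC: "p \<in> carrier_vec d" and qC: "q \<in> carrier_vec d" unfolding p_def q_def using x S_carrier by auto
  note orth_pq = orthogonal_to_system_eigen_components[OF sys x(1) orth, folded p_def q_def]
  show ?thesis
  proof (cases "p = 0\<^sub>v d")
    case False
    have "S *\<^sub>v p = p" unfolding p_def using eigen_split(2)[OF x(1)] .
    then show ?thesis using dual_system_extend_fixed[OF sys pC False _ orth_pq(1)] by blast
  next
    case True
    then have q0: "q \<noteq> 0\<^sub>v d" using x eigen_split(1)[OF x(1)] qC unfolding p_def q_def by auto
    have Sq: "- S *\<^sub>v q = q" unfolding q_def neg_S_vec[OF qC[unfolded q_def]] eigen_split(3)[OF x(1)] by simp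
    have "orthogonal_to_system d B k f e q" using orth_pq(2) unfolding orthogonal_to_system_def by blast
    then obtain e' f' where "dual_system d B (- S) (Suc k) e' f'"
      using anti_isometric_involution.dual_system_extend_fixed[OF neg dual_system_swap[OF sys] qC q0 Sq]
      by blast
    then have "dual_system d B (- (- S)) (Suc k) f' e'"
      by (rule anti_isometric_involution.dual_system_swap[OF neg])
    then show ?thesis by auto
  qed
qed

text \<open>The pairing of a dual system with its own vectors is the identity matrix; hence the
  \<open>d \<times> 2k\<close> matrix of the system has a left inverse and \<open>2k \<le> d\<close>.\<close>
lemma pairing_system_mat:
  assumes sys: "dual_system d B S k e f"
  shows "pairing_mat B d k e f * system_mat d k e f = 1\<^sub>m (2 * k)"
proof (rule eq_matI)
  note sysD = dual_systemD[OF sys]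
  let ?C = "system_mat d k e f" and ?D = "pairing_mat B d k e f"
  let ?vC = "\<lambda>j. if j < k then e j else f (j - k)" and ?vD = "\<lambda>i. if i < k then f i else e (i - k)"
  fix i j assume "i < dim_row (1\<^sub>m (2 * k) :: 'k mat)" "j < dim_col (1\<^sub>m (2 * k) :: 'k mat)"
  then have i: "i < 2 * k" and j: "j < 2 * k" by auto
  have vC: "?vC j \<in> carrier_vec d" and vD: "?vD i \<in> carrier_vec d" using i j sysD by auto
  have "col ?C j = ?vC j" unfolding system_mat_def using vC j by (intro eq_vecI) auto
  moreover have "row ?D i = B *\<^sub>v ?vD i" unfolding pairing_mat_def using vD i B_carrier by (intro eq_vecI) auto
  ultimately have "(?D * ?C) $$ (i, j) = (B *\<^sub>v ?vD i) \<bullet> ?vC j"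
    using i j by (simp add: system_mat_def pairing_mat_def)
  also have "\<dots> = bform B (?vC j) (?vD i)"
    unfolding bform_def using vC vD B_carrier by (intro comm_scalar_prod[of _ d]) auto
  also have "\<dots> = 1\<^sub>m (2 * k) $$ (i, j)"
    using i j sysD B_sym isotropic_fixed isotropic_negated by (cases "i < k"; cases "j < k") auto
  finally show "(?D * ?C) $$ (i, j) = 1\<^sub>m (2 * k) $$ (i, j)" .
qed (auto simp: system_mat_def pairing_mat_def)

lemma dual_system_size:
  assumes sys: "dual_system d B S k e f"
  shows "2 * k \<le> d"
  using right_inverse_dim_le[OF _ _ pairing_system_mat[OF sys]]
  by (simp add: system_mat_def pairing_mat_def)

text \<open>If the system spans, the matrix of the system is also a left inverse of the pairing,
  so \<open>d \<le> 2k\<close>.\<close>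
lemma spanning_dual_system_size:
  assumes sys: "dual_system d B S k e f" and sp: "spans d k e f"
  shows "d \<le> 2 * k"
proof -
  let ?C = "system_mat d k e f" and ?D = "pairing_mat B d k e f"
  have CC: "?C \<in> carrier_mat d (2 * k)" and DC: "?D \<in> carrier_mat (2 * k) d"
    unfolding system_mat_def pairing_mat_def by auto
  have CD_vec: "?C *\<^sub>v (?D *\<^sub>v v) = v" if v: "v \<in> carrier_vec d" for v
  proof -
    from sp v obtain a b where ab: "\<And>r. r < d \<Longrightarrow> v $ r = (\<Sum>i<k. a i * e i $ r + b i * f i $ r)"
      unfolding spans_def by blast
    define av where "av = vec (2 * k) (\<lambda>j. if j < k then a j else b (j - k))"
    have avC: "av \<in> carrier_vec (2 * k)" unfolding av_def by simp
    have "?C *\<^sub>v av = v"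
    proof (rule eq_vecI)
      fix r assume "r < dim_vec v"
      then have r: "r < d" using v by simp
      define g where "g = (\<lambda>j. (if j < k then e j else f (j - k)) $ r * av $ j)"
      have "(?C *\<^sub>v av) $ r = (\<Sum>j\<in>{0..<k+k}. g j)"
        using r unfolding system_mat_def g_def av_def by (simp add: scalar_prod_def mult_2)
      also have "\<dots> = (\<Sum>j\<in>{0..<k}. g j) + (\<Sum>j\<in>{0..<k}. g (j + k))"
        using sum.atLeastLessThan_concat[of 0 k "k + k" g] sum.shift_bounds_nat_ivl[of g 0 k k] by simp
      also have "\<dots> = (\<Sum>j\<in>{0..<k}. e j $ r * a j) + (\<Sum>j\<in>{0..<k}. f j $ r * b j)"
        unfolding g_def av_def by (intro arg_cong2[where f = "(+)"] sum.cong) auto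
      also have "\<dots> = v $ r" using ab[OF r] by (simp add: sum.distrib atLeast0LessThan ac_simps)
      finally show "(?C *\<^sub>v av) $ r = v $ r" .
    qed (use v CC in auto)
    moreover have "?D *\<^sub>v (?C *\<^sub>v av) = av"
      using assoc_mult_mat_vec[OF DC CC avC, symmetric] pairing_system_mat[OF sys] avC by simp
    ultimately show ?thesis by simp
  qed
  have "?C * ?D = 1\<^sub>m d"
  proof (rule eq_matI)
    fix i j assume "i < dim_row (1\<^sub>m d :: 'k mat)" "j < dim_col (1\<^sub>m d :: 'k mat)"
    then have i: "i < d" and j: "j < d" by auto
    have entry_unit: "(M *\<^sub>v unit_vec d j) $ i = M $$ (i, j)" if "M \<in> carrier_mat d d" for M :: "'k mat"
      using i j that by auto
    have "(?C * ?D) $$ (i, j) = ((?C * ?D) *\<^sub>v unit_vec d j) $ i"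
      by (rule entry_unit[OF mult_carrier_mat[OF CC DC], symmetric])
    also have "(?C * ?D) *\<^sub>v unit_vec d j = unit_vec d j"
      using CD_vec[of "unit_vec d j"] assoc_mult_mat_vec[OF CC DC, of "unit_vec d j"] by simp
    finally show "(?C * ?D) $$ (i, j) = 1\<^sub>m d $$ (i, j)" using i j by simp
  qed (use DC CC in auto)
  then show "d \<le> 2 * k" by (rule right_inverse_dim_le[OF CC DC])
qed

text \<open>Growing a dual system until it spans (its size is bounded by \<open>d/2\<close>) produces a
  hyperbolic basis.\<close>
theorem hyperbolic: "hyperbolic_form d B"
proof -
  have hyperbolic_if_spans: "hyperbolic_form d B" if sys: "dual_system d B S k e f" and sp: "spans d k e f" for k e f
  proof -
    note sysD = dual_systemD[OF sys]
    have "d = 2 * k" using dual_system_size[OF sys] spanning_dual_system_size[OF sys sp] by simp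
    moreover have "\<forall>i<k. \<forall>j<k. bform B (e i) (e j) = 0 \<and> bform B (f i) (f j) = 0 \<and>
        bform B (e i) (f j) = (if i = j then 1 else 0) \<and> bform B (f j) (e i) = (if i = j then 1 else 0)"
      using sysD isotropic_fixed isotropic_negated B_sym by auto
    ultimately show ?thesis
      unfolding hyperbolic_form_def using sysD(1,2) sp unfolding spans_def by blast
  qed
  have "(\<exists>e f. dual_system d B S k e f) \<or> hyperbolic_form d B" for k
  proof (induction k)
    case 0
    show ?case unfolding dual_system_def by auto
  next
    case (Suc k)
    then show ?case using hyperbolic_if_spans dual_system_extend by blast
  qed
  then show ?thesis using dual_system_size[of "Suc d"] by fastforce
qed

end

lemma scalar_if_reflections_scalar:
  assumes W: "finite_reflection_group n W" and R: "is_rep n W d \<rho>"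
    and refl_scalar: "\<And>s. s \<in> reflections n W \<Longrightarrow> \<rho> s = 1\<^sub>m d \<or> \<rho> s = - (1\<^sub>m d)"
    and w: "w \<in> W"
  shows "\<exists>c. \<rho> w = c \<cdot>\<^sub>m (1\<^sub>m d :: 'k::field mat)"
  using W w
proof (induction rule: reflection_induct)
  case one
  have "\<rho> (1\<^sub>m n) = 1\<^sub>m d" using R unfolding is_rep_def by blast
  then show ?case by (intro exI[of _ 1]) (simp add: one_smult_mat')
next
  case (step s x)
  from step.IH obtain c where c: "\<rho> x = c \<cdot>\<^sub>m 1\<^sub>m d" by blast
  have "s \<in> W" using step(1) unfolding reflections_def by auto
  then have "\<rho> (s * x) = \<rho> s * \<rho> x" using rep_mult[OF R _ step(2)] by blast
  moreover from refl_scalar[OF step(1)] have "\<rho> s * \<rho> x = c \<cdot>\<^sub>m 1\<^sub>m d \<or> \<rho> s * \<rho> x = (- c) \<cdot>\<^sub>m 1\<^sub>m d"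
    unfolding c by (auto intro!: eq_matI)
  ultimately show ?case by metis
qed

text \<open>An irreducible representation by scalars is one-dimensional: the line through the first
  basis vector is invariant.\<close>
lemma irreducible_scalar_dim:
  assumes irr: "irreducible_rep n W d (\<rho> :: complex mat \<Rightarrow> 'k::field mat)"
    and scalar: "\<And>w. w \<in> W \<Longrightarrow> \<exists>c. \<rho> w = c \<cdot>\<^sub>m 1\<^sub>m d"
  shows "d \<le> 1"
proof (rule ccontr)
  assume "\<not> d \<le> 1"
  then have d: "d > 1" by simp
  define U where "U = {v :: 'k vec. \<exists>a. v = a \<cdot>\<^sub>v unit_vec d 0}"
  have "is_subspace d U" unfolding is_subspace_def U_def
  proof (intro conjI ballI allI)
    have "0\<^sub>v d = (0 :: 'k) \<cdot>\<^sub>v unit_vec d 0" by (rule eq_vecI) auto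
    then show "0\<^sub>v d \<in> {v :: 'k vec. \<exists>a. v = a \<cdot>\<^sub>v unit_vec d 0}" by blast
    fix u v assume "u \<in> {v :: 'k vec. \<exists>a. v = a \<cdot>\<^sub>v (unit_vec d 0 :: 'k vec)}" "v \<in> {v :: 'k vec. \<exists>a. v = a \<cdot>\<^sub>v unit_vec d 0}"
    then obtain a b where "u = a \<cdot>\<^sub>v unit_vec d 0" "v = b \<cdot>\<^sub>v unit_vec d 0" by blast
    then have "u + v = (a + b) \<cdot>\<^sub>v unit_vec d 0" by (auto intro!: eq_vecI simp: algebra_simps)
    then show "u + v \<in> {v :: 'k vec. \<exists>a. v = a \<cdot>\<^sub>v unit_vec d 0}" by blast
  next
    fix c :: 'k and u assume "u \<in> {v :: 'k vec. \<exists>a. v = a \<cdot>\<^sub>v (unit_vec d 0 :: 'k vec)}"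
    then obtain a where "u = a \<cdot>\<^sub>v unit_vec d 0" by blast
    then have "c \<cdot>\<^sub>v u = (c * a) \<cdot>\<^sub>v unit_vec d 0" by (auto intro!: eq_vecI)
    then show "c \<cdot>\<^sub>v u \<in> {v :: 'k vec. \<exists>a. v = a \<cdot>\<^sub>v unit_vec d 0}" by blast
  qed auto
  moreover have "\<forall>w\<in>W. \<forall>u\<in>U. \<rho> w *\<^sub>v u \<in> U"
  proof (intro ballI)
    fix w u assume "w \<in> W" "u \<in> U"
    then obtain c a where "\<rho> w = c \<cdot>\<^sub>m 1\<^sub>m d" "u = a \<cdot>\<^sub>v unit_vec d 0" using scalar unfolding U_def by blast
    then have "\<rho> w *\<^sub>v u = (c * a) \<cdot>\<^sub>v unit_vec d 0"
      by (auto simp: smult_mat_mult_vec intro!: eq_vecI)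
    then show "\<rho> w *\<^sub>v u \<in> U" unfolding U_def by blast
  qed
  ultimately have "U = {0\<^sub>v d} \<or> U = carrier_vec d" using irr unfolding irreducible_rep_def by blast
  moreover have "unit_vec d 0 \<in> U" unfolding U_def by (auto intro!: exI[of _ 1])
  moreover have "unit_vec d 1 \<notin> U"
  proof
    assume "unit_vec d 1 \<in> U"
    then obtain a where "unit_vec d 1 = a \<cdot>\<^sub>v (unit_vec d 0 :: 'k vec)" unfolding U_def by auto
    from arg_cong[OF this, of "\<lambda>v. v $ 1"] d show False by simp
  qed
  ultimately show False using d by auto
qed

lemma exists_nonscalar_reflection:
  assumes W: "finite_reflection_group n W" and irr: "irreducible_rep n W d (\<rho> :: complex mat \<Rightarrow> 'k::field mat)"
    and d: "d > 1"
  obtains s where "s \<in> reflections n W" "\<rho> s \<noteq> 1\<^sub>m d" "\<rho> s \<noteq> - (1\<^sub>m d)"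
proof -
  have R: "is_rep n W d \<rho>" using irr unfolding irreducible_rep_def by auto
  have "\<not> (\<forall>s \<in> reflections n W. \<rho> s = 1\<^sub>m d \<or> \<rho> s = - (1\<^sub>m d))"
    using scalar_if_reflections_scalar[OF W R] irreducible_scalar_dim[OF irr] d by fastforce
  then show ?thesis using that by blast
qed

text \<open>For \<open>dim \<rho> > 1\<close> some reflection \<open>s\<close> acts by neither \<open>\<plusminus>1\<close>; then \<open>\<eta>(s) = 1\<close>, so \<open>\<rho>(s)\<close> is an
  involution reversing the sign of the form, and a symmetric nondegenerate such form is
  hyperbolic.\<close>
lemma invariant_symmetric_form_hyperbolic:
  assumes W: "finite_reflection_group n W" and irr: "irreducible_rep n W d (\<rho> :: complex mat \<Rightarrow> 'k::field_char_0 mat)"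
    and eta: "\<eta> \<in> X_set n W d \<rho>"
    and B: "invariant_form W d \<rho> (\<lambda>w. sign_char w * \<eta> w) B" and nd: "nondegenerate d B"
    and sym: "symmetric_form d B" and d: "d > 1"
  shows "hyperbolic_form d B"
proof -
  have G: "finite_mat_group n W" using W unfolding finite_reflection_group_def by auto
  have R: "is_rep n W d \<rho>" using irr unfolding irreducible_rep_def by auto
  obtain s where s: "s \<in> reflections n W" and nonscalar: "\<rho> s \<noteq> 1\<^sub>m d" "\<rho> s \<noteq> - (1\<^sub>m d)"
    using exists_nonscalar_reflection[OF W irr d] .
  have sW: "s \<in> W" using s unfolding reflections_def by auto
  have "\<eta> s = 1 \<or> \<eta> s = -1" using eta sW unfolding X_set_def sign_hom_def by auto
  moreover have "\<eta> s \<noteq> -1" using eta s nonscalar unfolding X_set_def by auto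
  ultimately have eta_s: "\<eta> s = 1" by simp
  have sgn: "(sign_char s :: 'k) = -1" by (rule reflection_sign_char[OF s])
  interpret anti_isometric_involution d B "\<rho> s"
  proof
    show "B \<in> carrier_mat d d" using B unfolding invariant_form_def by auto
    show "\<rho> s \<in> carrier_mat d d" by (rule rep_carrier[OF R sW])
    show "\<rho> s * \<rho> s = 1\<^sub>m d" by (rule rep_reflection_involution[OF G R s])
    show "bform B (\<rho> s *\<^sub>v x) (\<rho> s *\<^sub>v y) = - bform B x y"
      if "x \<in> carrier_vec d" "y \<in> carrier_vec d" for x y
      using B sW eta_s sgn that unfolding invariant_form_def by auto
  qed (use sym nd in auto)
  show ?thesis by (rule hyperbolic)
qed

theorem proposition2p3:
  fixes n d :: nat
    and W :: "complex mat set"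
    and \<rho> :: "complex mat \<Rightarrow> 'k :: field_char_0 mat"
    and \<eta> :: "complex mat \<Rightarrow> 'k"
  assumes W: "finite_reflection_group n W"
    and k: "splitting_field_for TYPE('k) n W"
    and irr: "irreducible_rep n W d \<rho>"
    and eta: "\<eta> \<in> X_set n W d \<rho>"
    and iso: "rep_iso W d (twist (dual_rep n W \<rho>) sign_char) (twist \<rho> \<eta>)"
  shows "(\<forall>\<eta>' \<in> X_set n W d \<rho>.
            rep_iso W d (twist (dual_rep n W \<rho>) sign_char) (twist \<rho> \<eta>') \<longrightarrow>
            (\<forall>w \<in> W. \<eta>' w = \<eta> w))
       \<and> (\<exists>B. invariant_form W d \<rho> (\<lambda>w. sign_char w * \<eta> w) B \<and> nondegenerate d B)
       \<and> (\<forall>B B'. invariant_form W d \<rho> (\<lambda>w. sign_char w * \<eta> w) B \<and> nondegenerate d B \<and>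
                 invariant_form W d \<rho> (\<lambda>w. sign_char w * \<eta> w) B' \<longrightarrow>
                 (\<exists>c. B' = c \<cdot>\<^sub>m B))
       \<and> (\<forall>B. invariant_form W d \<rho> (\<lambda>w. sign_char w * \<eta> w) B \<and> nondegenerate d B \<longrightarrow>
              (\<forall>a \<in> lie_H' n W. in_osp d B (rep_ext W d \<rho> a))
            \<and> (symmetric_form d B \<and> d > 1 \<longrightarrow> hyperbolic_form d B))"
proof -
  have G: "finite_mat_group n W" using W unfolding finite_reflection_group_def by auto
  have R: "is_rep n W d \<rho>" and d: "d > 0" using irr unfolding irreducible_rep_def by auto
  have h: "sign_hom W \<eta>" using eta unfolding X_set_def by auto
  have chi_sq: "(sign_char w * \<eta> w) * (sign_char w * \<eta> w) = (1::'k)" if "w \<in> W" for w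
    using sign_char_sq[of w, where 'k = 'k] sign_hom_sq[OF h that] by (simp add: algebra_simps)
  show ?thesis
    using X_set_iso_unique[OF W R d eta _ iso] exists_invariant_form[OF G R h iso]
      invariant_forms_proportional[OF G R k irr, where \<chi> = "\<lambda>w. sign_char w * \<eta> w", OF chi_sq]
      lie_H'_osp[OF G R eta]
      invariant_symmetric_form_hyperbolic[OF W irr eta]
    by blast
qed

end
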